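(* Let $A\in\mathbb{R}^{n\times n}$ with $\rho(A)<1$, $C\in\mathbb{R}^{m\times n}$, $Q\in\mathbb{S}^n_{++}$ (so that $Q^{-1}$ exists), $R\in\mathbb S^m_{++}$, $\lambda\in(0,1]$, $\Sigma$ the solution of $\Sigma=A\Sigma A^{\top}+Q$, $\Pi=C\Sigma C^{\top}+R$, and $M\in\mathbb S^n_{++}$. For $Y\ge0$ let $\bar X_{ol}(Y)$ denote the unique positive definite solution of $X=g_{\lambda,R+Y^{-1}}(X)$. Then the problem $$\min_{Y}\ \mathrm{tr}(\Pi Y)\quad\text{s.t. } Y\ge0,\ \bar X_{ol}(Y)\le M$$ is equivalent to the semidefinite program $$\min_{S,Y}\ \mathrm{tr}(\Pi Y)\quad\text{s.t. }\Psi(S,Y)\ge0,\ \begin{bmatrix}S&I\\ I&M\end{bmatrix}\ge0,\ Y\ge0,$$ where $$\Psi(S,Y)=\begin{bmatrix} S&\sqrt\lambda SA&\sqrt{1-\lambda}SA&S&0\\ \sqrt\lambda A^{\top}S&S+C^{\top}R^{-1}C&0&0&C^{\top}R^{-1}\\ \sqrt{1-\lambda}A^{\top}S&0&S&0&0\\ S&0&0&Q^{-1}&0\\ 0&R^{-1}C&0&0&Y+R^{-1}\end{bmatrix}.$$ (Equivalent means: $Y$ is feasible for the first problem if and only if there is $S$ such that $(S,Y)$ is feasible for the second, and the objectives coincide.)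
   Context: For $X\ge0$, $W>0$, $\theta\in(0,1]$, $g_{\theta,W}(X)=AXA^{\top}+Q-\theta AXC^{\top}(CXC^{\top}+W)^{-1}CXA^{\top}$. Matrix inequalities are in the positive semidefinite order; $\mathbb S^n_{++}$ denotes symmetric positive definite $n\times n$ matrices. Standing assumptions: $(A,\sqrt Q)$ stabilizable, $(A,C)$ detectable. *)

theory Defs
  imports "HOL-Analysis.Analysis"
begin

definition psd :: "real^'n^'n \<Rightarrow> bool" where
  "psd M \<longleftrightarrow> transpose M = M \<and> (\<forall>x. 0 \<le> x \<bullet> (M *v x))"

definition pd :: "real^'n^'n \<Rightarrow> bool" where
  "pd M \<longleftrightarrow> transpose M = M \<and> (\<forall>x. x \<noteq> 0 \<longrightarrow> 0 < x \<bullet> (M *v x))"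

definition loewner_le :: "real^'n^'n \<Rightarrow> real^'n^'n \<Rightarrow> bool" where
  "loewner_le X M \<longleftrightarrow> psd (M - X)"

definition spectral_radius :: "real^'n^'n \<Rightarrow> real" where
  "spectral_radius A = Max {cmod z | z. \<exists>v :: complex^'n. v \<noteq> 0 \<and>
      (map_matrix complex_of_real A) *v v = z *s v}"

definition g :: "real^'n^'n \<Rightarrow> real^'n^'m \<Rightarrow> real^'n^'n \<Rightarrow> real \<Rightarrow> real^'m^'m
    \<Rightarrow> real^'n^'n \<Rightarrow> real^'n^'n" where
  "g A C Q \<theta> W X = A ** X ** transpose A + Q
     - \<theta> *\<^sub>R (A ** X ** transpose C ** matrix_inv (C ** X ** transpose C + W) ** C ** X ** transpose A)"

(* g_{\<theta>,R+Y^{-1}}(X), with (C X C' + R + Y^{-1})^{-1} written as Y (I + (C X C' + R) Y)^{-1};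
   this coincides with the literal formula whenever Y is invertible and extends it to
   singular Y \<ge> 0 (Y^{-1} = "infinite noise" in the directions of ker Y). *)
definition g_ol :: "real^'n^'n \<Rightarrow> real^'n^'m \<Rightarrow> real^'n^'n \<Rightarrow> real \<Rightarrow> real^'m^'m
    \<Rightarrow> real^'m^'m \<Rightarrow> real^'n^'n \<Rightarrow> real^'n^'n" where
  "g_ol A C Q \<theta> R Y X = A ** X ** transpose A + Q
     - \<theta> *\<^sub>R (A ** X ** transpose C
           ** (Y ** matrix_inv (mat 1 + (C ** X ** transpose C + R) ** Y))
           ** C ** X ** transpose A)"

definition X_ol :: "real^'n^'n \<Rightarrow> real^'n^'m \<Rightarrow> real^'n^'n \<Rightarrow> real \<Rightarrow> real^'m^'m
    \<Rightarrow> real^'m^'m \<Rightarrow> real^'n^'n" where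
  "X_ol A C Q lam R Y = (THE X. pd X \<and> X = g_ol A C Q lam R Y X)"

definition hcat :: "real^'b^'a \<Rightarrow> real^'c^'a \<Rightarrow> real^('b + 'c)^'a" where
  "hcat P Q = (\<chi> i j. case j of Inl k \<Rightarrow> P $ i $ k | Inr k \<Rightarrow> Q $ i $ k)"

definition vcat :: "real^'c^'a \<Rightarrow> real^'c^'b \<Rightarrow> real^'c^('a + 'b)" where
  "vcat P Q = (\<chi> i. case i of Inl k \<Rightarrow> P $ k | Inr k \<Rightarrow> Q $ k)"

definition blk2 :: "real^'a^'a \<Rightarrow> real^'b^'a \<Rightarrow> real^'a^'b \<Rightarrow> real^'b^'b \<Rightarrow> real^('a+'b)^('a+'b)" where
  "blk2 P Q R S = vcat (hcat P Q) (hcat R S)"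

definition Psi :: "real^'n^'n \<Rightarrow> real^'n^'m \<Rightarrow> real^'n^'n \<Rightarrow> real^'m^'m \<Rightarrow> real
    \<Rightarrow> real^'n^'n \<Rightarrow> real^'m^'m \<Rightarrow> real^('n + ('n + ('n + ('n + 'm))))^('n + ('n + ('n + ('n + 'm))))" where
  "Psi A C Q R lam S Y =
    (let Ri = matrix_inv R; Qi = matrix_inv Q; a = sqrt lam; b = sqrt (1 - lam) in
     vcat (hcat S (hcat (a *\<^sub>R (S ** A)) (hcat (b *\<^sub>R (S ** A)) (hcat S 0))))
    (vcat (hcat (a *\<^sub>R (transpose A ** S)) (hcat (S + transpose C ** Ri ** C) (hcat 0 (hcat 0 (transpose C ** Ri)))))
    (vcat (hcat (b *\<^sub>R (transpose A ** S)) (hcat 0 (hcat S (hcat 0 0))))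
    (vcat (hcat S (hcat 0 (hcat 0 (hcat Qi 0))))
          (hcat 0 (hcat (Ri ** C) (hcat 0 (hcat 0 (Y + Ri)))))))))"

end

theory Submission
  imports Defs "Jordan_Normal_Form.Spectral_Radius"
begin

(* By the matrix inversion lemma, the Riccati map X |-> g_{lam,R+Y^-1}(X) has the information form
     G(X) = Q + (1 - lam) A X A' + lam A (X^-1 + T)^-1 A',   T = C' (R + Y^-1)^-1 C >= 0,
   which is monotone, bounded below by Q, and satisfies G(tX) >= t G(X) + (1 - t) Q for 0 < t <= 1.
   For such a map every positive definite supersolution P >= G(P) lies above the unique positive
   definite fixed point, and iterating G from P converges to it. Because A is stable, the Lyapunov
   solution Sigma is positive definite and a supersolution, so Xbar_ol(Y) exists.
   Minimising the quadratic form of Psi(S,Y) over its last four block components (Schur complements)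
   shows that Psi(S,Y) >= 0 iff S^-1 >= G(S^-1) for S > 0, while [S I; I M] >= 0 iff S > 0 and
   S^-1 <= M. So (S,Y) is feasible iff S^-1 is a supersolution below M; such an S^-1 lies above
   Xbar_ol(Y), and conversely S = Xbar_ol(Y)^-1 is feasible when Xbar_ol(Y) <= M. *)

no_notation Matrix.vec_index (infixl \<open>$\<close> 100)
no_notation Matrix.scalar_prod (infix \<open>\<bullet>\<close> 70)
hide_const (open) Matrix.mat Matrix.row Matrix.col Matrix.vec Spectral_Radius.spectral_radius
hide_fact (open) Matrix.vec_eq_iff Matrix.transpose_transpose

section \<open>Powers of stable matrices\<close>

fun matpow :: "real^'n^'n \<Rightarrow> nat \<Rightarrow> real^'n^'n" where
  "matpow A 0 = mat 1"
| "matpow A (Suc k) = matpow A k ** A"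

lemma matpow_scaleR: "matpow (c *\<^sub>R A) k = c ^ k *\<^sub>R matpow A k"
  by (induction k) (simp_all add: matrix_scalar_ac scalar_matrix_assoc[symmetric])

lemma map_matrix_scaleR_mult:
  "map_matrix complex_of_real (c *\<^sub>R A) *v v = complex_of_real c *s (map_matrix complex_of_real A *v v)"
  by (simp add: vec_eq_iff matrix_vector_mult_def sum_distrib_left mult.assoc)

text \<open>The spectral theory needed here exists for the complex matrices of the Jordan normal form
  library; we transfer along an enumeration \<open>h\<close> of the index type.\<close>

definition to_mat :: "(nat \<Rightarrow> 'n::finite) \<Rightarrow> real^'n^'n \<Rightarrow> complex Matrix.mat" where
  "to_mat h B = Matrix.mat CARD('n) CARD('n) (\<lambda>(i, j). complex_of_real (B $ h i $ h j))"

lemma to_mat_carrier: "to_mat h B \<in> carrier_mat CARD('n) CARD('n)"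
  for h :: "nat \<Rightarrow> 'n::finite"
  by (simp add: to_mat_def)

context
  fixes h :: "nat \<Rightarrow> 'n::finite"
  assumes h: "bij_betw h {0..<CARD('n)} UNIV"
begin

private abbreviation "h' \<equiv> inv_into {0..<CARD('n)} h"

private lemma h'_less: "h' a < CARD('n)"
  and h_h': "h (h' a) = a"
  using h bij_betw_inv_into_right inv_into_into unfolding bij_betw_def
  by (metis UNIV_I atLeastLessThan_iff)+

private lemma h'_h: "k < CARD('n) \<Longrightarrow> h' (h k) = k"
  using h bij_betw_inv_into_left by fastforce

private lemma sum_reindex: "(\<Sum>a\<in>UNIV. f a) = (\<Sum>k\<in>{0..<CARD('n)}. f (h k))"
  using sum.reindex_bij_betw[OF h, of f] by simp

lemma to_mat_mult: "to_mat h (B ** B') = to_mat h B * to_mat h B'"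
proof (rule eq_matI)
  fix i j assume "i < dim_row (to_mat h B * to_mat h B')" "j < dim_col (to_mat h B * to_mat h B')"
  then have ij: "i < CARD('n)" "j < CARD('n)" by (simp_all add: to_mat_def)
  have "(to_mat h B * to_mat h B') $$ (i, j)
      = (\<Sum>k\<in>{0..<CARD('n)}. complex_of_real (B $ h i $ h k * B' $ h k $ h j))"
    using ij by (simp add: to_mat_def scalar_prod_def)
  also have "\<dots> = to_mat h (B ** B') $$ (i, j)"
    using ij by (simp add: to_mat_def matrix_matrix_mult_def sum_reindex)
  finally show "to_mat h (B ** B') $$ (i, j) = (to_mat h B * to_mat h B') $$ (i, j)" ..
qed (simp_all add: to_mat_def)

lemma to_mat_one: "to_mat h (mat 1) = 1\<^sub>m CARD('n)"
proof (rule eq_matI)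
  fix i j assume "i < dim_row (1\<^sub>m CARD('n))" "j < dim_col (1\<^sub>m CARD('n) :: complex Matrix.mat)"
  moreover from this have "h i = h j \<longleftrightarrow> i = j"
    using h unfolding bij_betw_def inj_on_def by auto
  ultimately show "to_mat h (mat 1) $$ (i, j) = 1\<^sub>m CARD('n) $$ (i, j)"
    by (simp add: to_mat_def Finite_Cartesian_Product.mat_def)
qed (simp_all add: to_mat_def)

lemma to_mat_matpow: "to_mat h (matpow B k) = to_mat h B ^\<^sub>m k"
  by (induction k) (simp_all add: to_mat_one to_mat_mult carrier_matD[OF to_mat_carrier])

lemma eigenvector_of_to_mat:
  assumes "eigenvalue (to_mat h B) e"
  shows "\<exists>w. w \<noteq> 0 \<and> map_matrix complex_of_real B *v w = e *s w"
proof -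
  from assms obtain v where v: "v \<in> carrier_vec CARD('n)" "v \<noteq> 0\<^sub>v CARD('n)" "to_mat h B *\<^sub>v v = e \<cdot>\<^sub>v v"
    unfolding eigenvalue_def eigenvector_def by (auto simp: to_mat_def)
  define w where "w = (\<chi> a. vec_index v (h' a))"
  have "w \<noteq> 0"
  proof
    assume "w = 0"
    then have "vec_index v k = 0" if "k < CARD('n)" for k
      using that h'_h unfolding w_def by (metis vec_lambda_beta zero_index)
    then show False using v(1,2) by (auto intro: eq_vecI)
  qed
  moreover have "(map_matrix complex_of_real B *v w) $ a = e * w $ a" for a
  proof -
    have "(map_matrix complex_of_real B *v w) $ a = (\<Sum>b\<in>UNIV. complex_of_real (B $ a $ b) * w $ b)"
      by (simp add: matrix_vector_mult_def)
    also have "\<dots> = (\<Sum>k\<in>{0..<CARD('n)}. complex_of_real (B $ a $ h k) * vec_index v k)"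
      unfolding sum_reindex w_def using h'_h by (intro sum.cong) auto
    also have "\<dots> = vec_index (to_mat h B *\<^sub>v v) (h' a)"
      using h'_less h_h' v(1) by (simp add: to_mat_def scalar_prod_def)
    finally show ?thesis using v(3) h'_less v(1) by (simp add: w_def)
  qed
  ultimately show ?thesis
    by (auto simp: vec_eq_iff)
qed

lemma eigenvalue_to_matI:
  assumes w: "w \<noteq> 0" "map_matrix complex_of_real B *v w = e *s w"
  shows "eigenvalue (to_mat h B) e"
proof -
  define v where "v = Matrix.vec CARD('n) (\<lambda>k. w $ h k)"
  have "v \<noteq> 0\<^sub>v CARD('n)"
  proof
    assume "v = 0\<^sub>v CARD('n)"
    then have "w $ a = 0" for a using h'_less[of a] h_h'[of a] unfolding v_def
      by (metis index_vec index_zero_vec(1))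
    then show False using w(1) by (simp add: vec_eq_iff)
  qed
  moreover have "to_mat h B *\<^sub>v v = e \<cdot>\<^sub>v v"
  proof (rule eq_vecI)
    fix k assume "k < dim_vec (e \<cdot>\<^sub>v v)"
    then have k: "k < CARD('n)" by (simp add: v_def)
    have "vec_index (to_mat h B *\<^sub>v v) k = (map_matrix complex_of_real B *v w) $ h k"
      using k by (simp add: to_mat_def scalar_prod_def v_def matrix_vector_mult_def sum_reindex)
    then show "vec_index (to_mat h B *\<^sub>v v) k = vec_index (e \<cdot>\<^sub>v v) k"
      using k w(2) by (simp add: v_def)
  qed (simp add: to_mat_def v_def)
  moreover have "v \<in> carrier_vec CARD('n)"
    by (simp add: v_def)
  ultimately show ?thesis
    unfolding eigenvalue_def eigenvector_def using carrier_matD(1)[OF to_mat_carrier, of h B] by auto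
qed

lemma eigenvalue_to_mat_iff:
  "eigenvalue (to_mat h B) e \<longleftrightarrow> (\<exists>w. w \<noteq> 0 \<and> map_matrix complex_of_real B *v w = e *s w)"
  using eigenvector_of_to_mat eigenvalue_to_matI by blast

lemma spectral_radius_to_mat: "spectral_radius B = Spectral_Radius.spectral_radius (to_mat h B)"
proof -
  have "{cmod z |z. \<exists>v. v \<noteq> 0 \<and> map_matrix complex_of_real B *v v = z *s v}
      = norm ` spectrum (to_mat h B)"
    by (auto simp: spectrum_def eigenvalue_to_mat_iff intro!: image_eqI)
  then show ?thesis
    unfolding Defs.spectral_radius_def Spectral_Radius.spectral_radius_def by (rule arg_cong)
qed

lemma norm_bound_to_mat: "norm_bound (to_mat h B) b \<Longrightarrow> \<bar>B $ i $ j\<bar> \<le> b"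
  unfolding norm_bound_def using h'_less h_h' carrier_matD[OF to_mat_carrier, of h B]
  by (metis norm_of_real to_mat_def index_mat(1) case_prod_conv)

end

lemma spectral_radius_attained:
  obtains z v where "v \<noteq> 0" "map_matrix complex_of_real B *v v = z *s v"
    "cmod z = spectral_radius (B :: real^'n^'n)"
proof -
  obtain h :: "nat \<Rightarrow> 'n" where h: "bij_betw h {0..<CARD('n)} UNIV"
    using ex_bij_betw_nat_finite[of "UNIV :: 'n set"] by auto
  have "spectral_radius B \<in> norm ` spectrum (to_mat h B)"
    unfolding spectral_radius_to_mat[OF h] by (rule spectral_radius_mem_max(1)[OF to_mat_carrier]) simp
  then show ?thesis
    using that by (auto simp: spectrum_def eigenvalue_to_mat_iff[OF h])
qed

lemma eigenvalue_le_spectral_radius: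
  assumes "v \<noteq> 0" "map_matrix complex_of_real B *v v = z *s v"
  shows "cmod z \<le> spectral_radius (B :: real^'n^'n)"
proof -
  obtain h :: "nat \<Rightarrow> 'n" where h: "bij_betw h {0..<CARD('n)} UNIV"
    using ex_bij_betw_nat_finite[of "UNIV :: 'n set"] by auto
  have "cmod z \<in> norm ` spectrum (to_mat h B)"
    using assms eigenvalue_to_mat_iff[OF h, of B z] by (auto simp: spectrum_def)
  then show ?thesis
    unfolding spectral_radius_to_mat[OF h] using spectral_radius_mem_max(2)[OF to_mat_carrier] by simp
qed

lemma spectral_radius_scaleR:
  assumes "0 < c"
  shows "spectral_radius (c *\<^sub>R B) = c * spectral_radius B"
proof (rule antisym)
  obtain z v where v: "v \<noteq> 0" "map_matrix complex_of_real (c *\<^sub>R B) *v v = z *s v"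
    and z: "cmod z = spectral_radius (c *\<^sub>R B)"
    by (rule spectral_radius_attained)
  have "map_matrix complex_of_real B *v v = (z / complex_of_real c) *s v"
    using v(2) assms by (simp add: map_matrix_scaleR_mult vec_eq_iff field_simps)
  then have "cmod (z / complex_of_real c) \<le> spectral_radius B"
    by (rule eigenvalue_le_spectral_radius[OF v(1)])
  then have "cmod z / c \<le> spectral_radius B"
    using assms by (simp add: norm_divide)
  then show "spectral_radius (c *\<^sub>R B) \<le> c * spectral_radius B"
    using z assms by (simp add: field_simps)
next
  obtain z v where v: "v \<noteq> 0" "map_matrix complex_of_real B *v v = z *s v"
    and z: "cmod z = spectral_radius B"
    by (rule spectral_radius_attained)
  have "map_matrix complex_of_real (c *\<^sub>R B) *v v = (complex_of_real c * z) *s v"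
    using v(2) by (simp add: map_matrix_scaleR_mult vec_eq_iff)
  then have "cmod (complex_of_real c * z) \<le> spectral_radius (c *\<^sub>R B)"
    by (rule eigenvalue_le_spectral_radius[OF v(1)])
  then show "c * spectral_radius B \<le> spectral_radius (c *\<^sub>R B)"
    using z assms by (simp add: norm_mult)
qed

lemma matpow_bounded:
  fixes B :: "real^'n^'n"
  assumes "spectral_radius B < 1"
  obtains b where "\<And>k i j. \<bar>matpow B k $ i $ j\<bar> \<le> b"
proof -
  obtain h :: "nat \<Rightarrow> 'n" where h: "bij_betw h {0..<CARD('n)} UNIV"
    using ex_bij_betw_nat_finite[of "UNIV :: 'n set"] by auto
  obtain as where "char_poly (to_mat h B) = (\<Prod>a\<leftarrow>as. [:- a, 1:])"
    using char_poly_factorized[OF to_mat_carrier] by blast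
  then obtain b where b: "\<And>k. norm_bound (to_mat h B ^\<^sub>m k) b"
    using spectral_radius_jnf_norm_bound_less_1[OF to_mat_carrier _ jordan_nf_exists[OF to_mat_carrier]]
      assms spectral_radius_to_mat[OF h] by metis
  show ?thesis
    using that norm_bound_to_mat[OF h] b unfolding to_mat_matpow[OF h, symmetric] by blast
qed

text \<open>For \<open>\<rho>(A) < r < 1\<close> the powers of \<open>A / r\<close> are bounded, so those of \<open>A\<close> decay like \<open>r\<^sup>k\<close>.\<close>

lemma matpow_tendsto_zero:
  assumes "spectral_radius A < 1"
  shows "(\<lambda>k. matpow A k $ i $ j) \<longlonglongrightarrow> 0"
proof -
  define r where "r = (max (spectral_radius A) 0 + 1) / 2"
  have r: "0 < r" "r < 1" "spectral_radius A < r"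
    using assms by (auto simp: r_def)
  have "spectral_radius ((1 / r) *\<^sub>R A) < 1"
    using r by (simp add: spectral_radius_scaleR field_simps)
  then obtain b where b: "\<And>k. \<bar>matpow ((1 / r) *\<^sub>R A) k $ i $ j\<bar> \<le> b"
    using matpow_bounded by metis
  have "\<bar>matpow A k $ i $ j\<bar> \<le> b * r ^ k" for k
  proof -
    have "matpow A k = r ^ k *\<^sub>R matpow ((1 / r) *\<^sub>R A) k"
      using r(1) by (simp add: matpow_scaleR power_one_over flip: power_mult_distrib)
    then show ?thesis
      using b[of k] r(1) by (simp add: abs_mult mult.commute mult_left_mono)
  qed
  moreover have "(\<lambda>k. b * r ^ k) \<longlonglongrightarrow> 0"
    using r by (intro tendsto_mult_right_zero LIMSEQ_realpow_zero) auto
  ultimately show ?thesis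
    using Lim_null_comparison[OF always_eventually, of "\<lambda>k. matpow A k $ i $ j" "\<lambda>k. b * r ^ k"]
    by simp
qed

section \<open>Quadratic forms\<close>

declare transpose_matrix_vector [simp del]

definition qf :: "real^'n^'n \<Rightarrow> real^'n \<Rightarrow> real" where
  "qf M x = x \<bullet> (M *v x)"

lemma matrix_eqI: "(\<And>x. A *v x = B *v x) \<Longrightarrow> A = (B :: real^'n^'m)"
  using matrix_eq by blast

lemma transpose_add: "transpose (A + B) = transpose A + transpose B"
  by (simp add: transpose_def vec_eq_iff)

lemma transpose_diff: "transpose (A - B) = transpose A - transpose B"
  by (simp add: transpose_def vec_eq_iff)

lemma transpose_zero [simp]: "transpose 0 = 0"
  by (simp add: transpose_def vec_eq_iff)

lemma transpose_sandwich:
  "transpose (B ** M ** transpose B) = B ** transpose M ** transpose (B :: real^'n^'m)"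
  by (simp add: matrix_transpose_mul matrix_mul_assoc)

lemma matrix_diff_rdistrib: "(A - B) ** C = A ** C - B ** (C :: real^'n^'m)"
  by (vector matrix_matrix_mult_def sum_subtractf[symmetric] field_simps)

lemma inner_matrix_transpose: "x \<bullet> (M *v y) = (transpose M *v x) \<bullet> (y :: real^'n)"
  by (simp add: dot_lmul_matrix transpose_matrix_vector)

lemma inner_matrix_sym: "transpose M = M \<Longrightarrow> x \<bullet> (M *v y) = (M *v x) \<bullet> (y :: real^'n)"
  by (metis inner_matrix_transpose)

lemma qf_add: "qf (M + N) x = qf M x + qf N x"
  by (simp add: qf_def matrix_vector_mult_add_rdistrib inner_add_right)

lemma qf_diff: "qf (M - N) x = qf M x - qf N x"
  by (simp add: qf_def matrix_vector_mult_diff_rdistrib inner_diff_right)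

lemma qf_scaleR: "qf (c *\<^sub>R M) x = c * qf M x"
  by (simp add: qf_def scaleR_matrix_vector_assoc[symmetric])

lemma qf_scaleR_vec: "qf M (c *\<^sub>R x) = c * c * qf M x"
  by (simp add: qf_def matrix_vector_mult_scaleR)

lemma qf_zero_vec [simp]: "qf M 0 = 0"
  by (simp add: qf_def)

lemma qf_transpose: "qf (transpose M) x = qf M x"
  unfolding qf_def by (subst inner_matrix_transpose) (simp add: inner_commute)

lemma qf_transpose_sandwich: "qf (transpose B ** M ** B) x = qf M (B *v x)"
  by (simp add: qf_def inner_matrix_transpose matrix_vector_mul_assoc[symmetric])

lemma qf_sandwich: "qf (B ** M ** transpose B) x = qf M (transpose B *v x)"
  using qf_transpose_sandwich[of "transpose B"] by simp

lemma qf_add_vec: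
  assumes "transpose M = M"
  shows "qf M (u + v) = qf M u + 2 * ((M *v u) \<bullet> v) + qf M v"
proof -
  have "u \<bullet> (M *v v) = (M *v u) \<bullet> v" "v \<bullet> (M *v u) = (M *v u) \<bullet> v"
    by (rule inner_matrix_sym[OF assms], rule inner_commute)
  then show ?thesis
    unfolding qf_def matrix_vector_right_distrib inner_add_left inner_add_right by simp
qed

lemma psd_qf: "psd M \<longleftrightarrow> transpose M = M \<and> (\<forall>x. 0 \<le> qf M x)"
  by (simp add: psd_def qf_def)

lemma pd_qf: "pd M \<longleftrightarrow> transpose M = M \<and> (\<forall>x. x \<noteq> 0 \<longrightarrow> 0 < qf M x)"
  by (simp add: pd_def qf_def)

lemma loewner_le_qf: "loewner_le X M \<longleftrightarrow> transpose (M - X) = M - X \<and> (\<forall>x. qf X x \<le> qf M x)"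
  by (simp add: loewner_le_def psd_qf qf_diff)

lemma pd_sym: "pd M \<Longrightarrow> transpose M = M"
  by (simp add: pd_qf)

lemma psd_sym: "psd M \<Longrightarrow> transpose M = M"
  by (simp add: psd_qf)

lemma psd_qf_nonneg: "psd M \<Longrightarrow> 0 \<le> qf M x"
  by (simp add: psd_qf)

lemma pd_imp_psd: "pd M \<Longrightarrow> psd M"
  unfolding pd_qf psd_qf by (metis less_imp_le order.refl qf_zero_vec)

lemma pd_qf_nonneg: "pd M \<Longrightarrow> 0 \<le> qf M x"
  by (simp add: pd_imp_psd psd_qf_nonneg)

lemma pd_add_psd: "pd M \<Longrightarrow> psd N \<Longrightarrow> pd (M + N)"
  unfolding pd_qf psd_qf by (simp add: qf_add transpose_add add_pos_nonneg)

lemma pd_scaleR: "pd M \<Longrightarrow> 0 < c \<Longrightarrow> pd (c *\<^sub>R M)"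
  unfolding pd_qf by (simp add: transpose_scalar qf_scaleR)

lemma psd_sandwich: "psd M \<Longrightarrow> psd (B ** M ** transpose B)"
  unfolding psd_qf by (simp add: transpose_sandwich qf_sandwich)

lemma symmetric_eqI:
  fixes M N :: "real^'n^'n"
  assumes "transpose M = M" "transpose N = N" "\<And>x. qf M x = qf N x"
  shows "M = N"
proof -
  have sym: "transpose (M - N) = M - N" and qf0: "\<And>x. qf (M - N) x = 0"
    using assms by (simp_all add: transpose_diff qf_diff)
  have "(M - N) *v y = 0 *v y" for y
    using qf_add_vec[OF sym, of y "(M - N) *v y"] qf0 by simp
  then have "M - N = 0"
    by (rule matrix_eqI)
  then show ?thesis
    by simp
qed

lemma entry_polarization:
  assumes "transpose M = M"
  shows "M $ i $ j = (qf M (axis i 1 + axis j 1) - qf M (axis i 1) - qf M (axis j 1)) / 2"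
proof -
  have "(M *v axis i 1) \<bullet> axis j 1 = M $ j $ i"
    by (simp add: inner_axis matrix_vector_mult_basis column_def)
  also have "\<dots> = M $ i $ j"
    using arg_cong[OF assms, of "\<lambda>N. N $ i $ j"] by (simp add: transpose_def)
  finally have "(M *v axis i 1) \<bullet> axis j 1 = M $ i $ j" .
  then show ?thesis
    using qf_add_vec[OF assms, of "axis i 1" "axis j 1"] by simp
qed

lemma qf_entries: "qf M x = (\<Sum>i\<in>UNIV. \<Sum>j\<in>UNIV. x $ i * M $ i $ j * x $ j)"
  by (simp add: qf_def inner_vec_def matrix_vector_mult_def sum_distrib_left mult.assoc)

lemma abs_qf_le: "\<bar>qf M x\<bar> \<le> (\<Sum>i\<in>UNIV. \<Sum>j\<in>UNIV. \<bar>M $ i $ j\<bar>) * (x \<bullet> x)"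
proof -
  have xx: "\<bar>x $ i\<bar> * \<bar>x $ j\<bar> \<le> x \<bullet> x" for i j
  proof -
    have "\<bar>x $ i\<bar> * \<bar>x $ j\<bar> \<le> norm x * norm x"
      by (intro mult_mono component_le_norm_cart) auto
    then show ?thesis
      by (simp add: power2_norm_eq_inner[symmetric] power2_eq_square)
  qed
  have "\<bar>qf M x\<bar> \<le> (\<Sum>i\<in>UNIV. \<Sum>j\<in>UNIV. \<bar>x $ i * M $ i $ j * x $ j\<bar>)"
    unfolding qf_entries by (rule order.trans[OF sum_abs sum_mono]) (rule sum_abs)
  also have "\<dots> \<le> (\<Sum>i\<in>UNIV. \<Sum>j\<in>UNIV. \<bar>M $ i $ j\<bar> * (x \<bullet> x))"
  proof (intro sum_mono)
    fix i j
    have "\<bar>x $ i * M $ i $ j * x $ j\<bar> = \<bar>M $ i $ j\<bar> * (\<bar>x $ i\<bar> * \<bar>x $ j\<bar>)"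
      by (simp add: abs_mult)
    also have "\<dots> \<le> \<bar>M $ i $ j\<bar> * (x \<bullet> x)"
      by (intro mult_left_mono xx) auto
    finally show "\<bar>x $ i * M $ i $ j * x $ j\<bar> \<le> \<bar>M $ i $ j\<bar> * (x \<bullet> x)" .
  qed
  finally show ?thesis
    by (simp add: sum_distrib_right)
qed

lemma qf_le_norm_bound: obtains c where "\<And>x. qf M x \<le> c * (x \<bullet> x)"
  using abs_qf_le[of M] by (meson abs_le_D1)

lemma pd_qf_ge_norm:
  assumes "pd M"
  obtains c where "0 < c" "\<And>x. c * (x \<bullet> x) \<le> qf M x"
proof -
  have cont: "continuous_on (sphere 0 1) (qf M)"
    unfolding qf_def[abs_def]
    by (intro continuous_on_inner continuous_on_id matrix_vector_mult_linear_continuous_on)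
  have "sphere (0 :: real^'n) 1 \<noteq> {}"
    using norm_axis_1[of undefined] by (metis empty_iff mem_sphere_0)
  then obtain x0 where x0: "x0 \<in> sphere 0 1" "\<And>y. y \<in> sphere 0 1 \<Longrightarrow> qf M x0 \<le> qf M y"
    using continuous_attains_inf[OF compact_sphere _ cont] by blast
  have "qf M x0 * (x \<bullet> x) \<le> qf M x" for x
  proof (cases "x = 0")
    case False
    have "qf M x0 \<le> qf M ((1 / norm x) *\<^sub>R x)"
      using False by (intro x0(2)) (simp add: norm_scaleR)
    then have "norm x * norm x * qf M x0 \<le> norm x * norm x * qf M ((1 / norm x) *\<^sub>R x)"
      by (intro mult_left_mono) auto
    then show ?thesis
      using False by (simp add: qf_scaleR_vec dot_square_norm power2_eq_square mult.commute)
  qed simp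
  moreover have "x0 \<noteq> 0"
    using x0(1) by (intro notI) simp
  then have "0 < qf M x0"
    using assms by (simp add: pd_qf)
  ultimately show ?thesis using that by blast
qed

lemma matrix_inv:
  fixes M :: "real^'n^'n"
  assumes "invertible M"
  shows matrix_inv_right: "M ** matrix_inv M = mat 1"
    and matrix_inv_left: "matrix_inv M ** M = mat 1"
proof -
  from assms obtain N where "M ** N = mat 1 \<and> N ** M = mat 1"
    unfolding invertible_def by blast
  then have "M ** matrix_inv M = mat 1 \<and> matrix_inv M ** M = mat 1"
    unfolding matrix_inv_def by (rule someI)
  then show "M ** matrix_inv M = mat 1" "matrix_inv M ** M = mat 1" by auto
qed

lemma matrix_inv_unique:
  fixes M N :: "real^'n^'n"
  assumes "M ** N = mat 1"
  shows "matrix_inv M = N"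
proof -
  have "invertible M"
    using assms invertible_right_inverse by blast
  have "matrix_inv M = matrix_inv M ** (M ** N)"
    using assms by simp
  also have "\<dots> = N"
    using matrix_inv_left[OF \<open>invertible M\<close>] by (simp add: matrix_mul_assoc)
  finally show ?thesis .
qed

lemma matrix_inv_inv: "invertible (M :: real^'n^'n) \<Longrightarrow> matrix_inv (matrix_inv M) = M"
  by (simp add: matrix_inv_left matrix_inv_unique)

lemma matrix_inv_mult_vec:
  fixes M :: "real^'n^'n"
  assumes "invertible M"
  shows "M *v (matrix_inv M *v x) = x" "matrix_inv M *v (M *v x) = x"
  by (simp_all add: matrix_inv_right matrix_inv_left assms matrix_vector_mul_assoc)

lemma transpose_matrix_inv:
  assumes "invertible (M :: real^'n^'n)"
  shows "transpose (matrix_inv M) = matrix_inv (transpose M)"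
  using matrix_inv_unique[of "transpose M" "transpose (matrix_inv M)"]
  by (simp add: matrix_transpose_mul[symmetric] matrix_inv_left assms)

lemma matrix_inv_scaleR:
  assumes "invertible (M :: real^'n^'n)" "c \<noteq> 0"
  shows "matrix_inv (c *\<^sub>R M) = (1 / c) *\<^sub>R matrix_inv M"
  by (rule matrix_inv_unique)
    (simp add: assms matrix_inv_right matrix_scalar_ac scalar_matrix_assoc[symmetric])

lemma invertibleI_ker:
  fixes M :: "real^'n^'n"
  assumes "\<And>x. M *v x = 0 \<Longrightarrow> x = 0"
  shows "invertible M"
  using assms matrix_left_invertible_ker invertible_left_inverse by blast

lemma pd_invertible: "pd (M :: real^'n^'n) \<Longrightarrow> invertible M"
  by (rule invertibleI_ker) (metis pd_qf qf_def inner_zero_right less_irrefl)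

lemma pd_matrix_inv:
  assumes "pd (M :: real^'n^'n)"
  shows "pd (matrix_inv M)"
proof -
  have inv: "invertible M"
    using assms by (rule pd_invertible)
  have "0 < qf (matrix_inv M) x" if "x \<noteq> 0" for x
  proof -
    have "matrix_inv M *v x \<noteq> 0"
      using that matrix_inv_mult_vec(1)[OF inv, of x] by auto
    then have "0 < qf M (matrix_inv M *v x)"
      using assms by (simp add: pd_qf)
    then show ?thesis
      by (simp add: qf_def matrix_inv_mult_vec(1)[OF inv] inner_commute)
  qed
  then show ?thesis
    using assms by (simp add: pd_qf transpose_matrix_inv[OF inv])
qed

text \<open>Completing the square; this is the Schur complement lemma in quadratic-form language.\<close>

lemma quadratic_min:
  fixes P :: "real^'n^'n"
  assumes "pd P"
  shows quadratic_ge_min: "- qf (matrix_inv P) b \<le> 2 * (b \<bullet> u) + qf P u"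
    and quadratic_min_attained: "\<exists>u. 2 * (b \<bullet> u) + qf P u = - qf (matrix_inv P) b"
proof -
  have inv: "invertible P" and sym: "transpose P = P"
    using assms by (simp_all add: pd_invertible pd_sym)
  define w where "w = matrix_inv P *v b"
  have Pw: "P *v w = b"
    unfolding w_def by (rule matrix_inv_mult_vec(1)[OF inv])
  have "(P *v u) \<bullet> w = u \<bullet> (P *v w)" for u
    by (rule inner_matrix_sym[OF sym, symmetric])
  then have cross: "(P *v u) \<bullet> w = b \<bullet> u" for u
    by (simp add: Pw inner_commute)
  have "qf P w = qf (matrix_inv P) b"
    unfolding qf_def Pw by (simp add: w_def inner_commute)
  then have square: "2 * (b \<bullet> u) + qf P u = qf P (u + w) - qf (matrix_inv P) b" for u
    using qf_add_vec[OF sym, of u w] cross by simp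
  show "- qf (matrix_inv P) b \<le> 2 * (b \<bullet> u) + qf P u"
    using square[of u] pd_qf_nonneg[OF assms, of "u + w"] by linarith
  have "2 * (b \<bullet> - w) + qf P (- w) = - qf (matrix_inv P) b"
    using square[of "- w"] by simp
  then show "\<exists>u. 2 * (b \<bullet> u) + qf P u = - qf (matrix_inv P) b" ..
qed

lemma quadratic_nonneg_iff:
  fixes P :: "real^'n^'n"
  assumes "pd P"
  shows "(\<forall>u. 0 \<le> c + 2 * (b \<bullet> u) + qf P u) \<longleftrightarrow> qf (matrix_inv P) b \<le> c"
proof
  assume nonneg: "\<forall>u. 0 \<le> c + 2 * (b \<bullet> u) + qf P u"
  obtain u where "2 * (b \<bullet> u) + qf P u = - qf (matrix_inv P) b"
    using quadratic_min_attained[OF assms] by blast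
  with nonneg[rule_format, of u] show "qf (matrix_inv P) b \<le> c"
    by linarith
next
  assume le: "qf (matrix_inv P) b \<le> c"
  show "\<forall>u. 0 \<le> c + 2 * (b \<bullet> u) + qf P u"
  proof
    fix u
    show "0 \<le> c + 2 * (b \<bullet> u) + qf P u"
      using quadratic_ge_min[OF assms, of b u] le by linarith
  qed
qed

lemma qf_matrix_inv_antimono:
  assumes "pd M" "pd N" "\<And>x. qf M x \<le> qf N x"
  shows "qf (matrix_inv N) b \<le> qf (matrix_inv M) b"
proof -
  have "\<forall>u. 0 \<le> qf (matrix_inv M) b + 2 * (b \<bullet> u) + qf M u"
    using quadratic_nonneg_iff[OF assms(1)] by blast
  then have "0 \<le> qf (matrix_inv M) b + 2 * (b \<bullet> u) + qf N u" for u
    using assms(3)[of u] by (metis add_left_mono order.trans)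
  then show ?thesis
    using quadratic_nonneg_iff[OF assms(2)] by blast
qed

section \<open>Block matrices\<close>

definition join :: "real^'a \<Rightarrow> real^'b \<Rightarrow> real^('a::finite + 'b::finite)" where
  "join u v = (\<chi> i. case i of Inl k \<Rightarrow> u $ k | Inr k \<Rightarrow> v $ k)"

lemma all_join: "(\<forall>x. P x) \<longleftrightarrow> (\<forall>u v. P (join u v))"
proof -
  have "x = join (\<chi> k. x $ Inl k) (\<chi> k. x $ Inr k)" for x :: "real^('a + 'b)"
    by (simp add: join_def vec_eq_iff split: sum.split)
  then show ?thesis by metis
qed

lemma sum_UNIV_Plus:
  "(\<Sum>i\<in>UNIV. f i) = (\<Sum>k\<in>UNIV. f (Inl k)) + (\<Sum>k\<in>UNIV. f (Inr k))"
  for f :: "'a::finite + 'b::finite \<Rightarrow> 'c::comm_monoid_add"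
  by (subst UNIV_Plus_UNIV[symmetric], subst sum.Plus) (auto simp: comp_def)

lemma vcat_mult: "vcat P Q *v x = join (P *v x) (Q *v x)"
  by (simp add: vcat_def join_def matrix_vector_mult_def vec_eq_iff split: sum.split)

lemma hcat_mult_join: "hcat P Q *v join u v = P *v u + Q *v v"
  by (simp add: hcat_def join_def matrix_vector_mult_def vec_eq_iff sum_UNIV_Plus)

lemma inner_join: "join u v \<bullet> join u' v' = u \<bullet> u' + v \<bullet> v'"
  by (simp add: join_def inner_vec_def sum_UNIV_Plus)

lemma transpose_vcat: "transpose (vcat P Q) = hcat (transpose P) (transpose Q)"
  by (simp add: vcat_def hcat_def transpose_def vec_eq_iff split: sum.split)

lemma transpose_hcat: "transpose (hcat P Q) = vcat (transpose P) (transpose Q)"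
  by (simp add: vcat_def hcat_def transpose_def vec_eq_iff split: sum.split)

lemma hcat_vcat: "hcat (vcat P Q) (vcat P' Q') = vcat (hcat P P') (hcat Q Q')"
  by (simp add: vcat_def hcat_def vec_eq_iff split: sum.split)

lemma qf_blk2_id: "qf (blk2 S (mat 1) (mat 1) M) (join u v) = qf S u + 2 * (u \<bullet> v) + qf M v"
  by (simp add: qf_def blk2_def vcat_mult hcat_mult_join inner_join inner_add_right inner_commute)

lemma psd_blk2_id_iff:
  assumes M: "pd M"
  shows "psd (blk2 S (mat 1) (mat 1) M) \<longleftrightarrow> pd S \<and> (\<forall>v. qf (matrix_inv S) v \<le> qf M v)"
proof
  assume psd: "psd (blk2 S (mat 1) (mat 1) M)"
  have "transpose S $ i $ j = S $ i $ j" for i j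
    using arg_cong[OF psd_sym[OF psd], of "\<lambda>N. N $ Inl i $ Inl j"]
    by (simp add: transpose_def blk2_def vcat_def hcat_def)
  then have sym: "transpose S = S"
    by (simp add: vec_eq_iff)
  have nonneg: "0 \<le> qf S u + 2 * (u \<bullet> v) + qf M v" for u v
    using psd_qf_nonneg[OF psd, of "join u v"] by (simp add: qf_blk2_id)
  have "qf (matrix_inv M) u \<le> qf S u" for u
    using quadratic_nonneg_iff[OF M, of "qf S u" u] nonneg by blast
  then have S: "pd S"
    using pd_matrix_inv[OF M] sym unfolding pd_qf by (meson less_le_trans)
  have "qf (matrix_inv S) v \<le> qf M v" for v
    using quadratic_nonneg_iff[OF S, of "qf M v" v] nonneg by (simp add: inner_commute add_ac)
  with S show "pd S \<and> (\<forall>v. qf (matrix_inv S) v \<le> qf M v)"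
    by blast
next
  assume S: "pd S \<and> (\<forall>v. qf (matrix_inv S) v \<le> qf M v)"
  then have "0 \<le> qf S u + 2 * (u \<bullet> v) + qf M v" for u v
    using quadratic_nonneg_iff[of S "qf M v" v] by (simp add: inner_commute add_ac)
  moreover have "transpose (blk2 S (mat 1) (mat 1) M) = blk2 S (mat 1) (mat 1) M"
    using S pd_sym[OF M] by (simp add: pd_sym blk2_def transpose_vcat transpose_hcat hcat_vcat)
  ultimately show "psd (blk2 S (mat 1) (mat 1) M)"
    unfolding psd_qf all_join[of "\<lambda>x. 0 \<le> qf _ x"] by (simp add: qf_blk2_id)
qed

section \<open>The information form of the Riccati map\<close>

lemma invertible_mat_1_plus:
  fixes M Y :: "real^'m^'m"
  assumes M: "pd M" and Y: "psd Y"
  shows "invertible (mat 1 + M ** Y)"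
proof (rule invertibleI_ker)
  fix v assume "(mat 1 + M ** Y) *v v = 0"
  then have v: "v = - (M *v (Y *v v))"
    by (simp add: matrix_vector_mult_add_rdistrib matrix_vector_mul_assoc[symmetric] add_eq_0_iff)
  then have "qf Y v = - qf M (Y *v v)"
    by (metis qf_def inner_commute inner_minus_right)
  then have "qf M (Y *v v) = 0"
    using psd_qf_nonneg[OF Y, of v] pd_qf_nonneg[OF M, of "Y *v v"] by linarith
  then have "Y *v v = 0"
    using M by (metis pd_qf less_irrefl)
  then show "v = 0"
    using v by simp
qed

text \<open>For invertible \<open>Y\<close> this is \<open>(R + Y\<^sup>-\<^sup>1)\<^sup>-\<^sup>1\<close> by the matrix inversion lemma;
  unlike that expression it is defined for all \<open>Y \<ge> 0\<close>.\<close>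

definition noise_info :: "real^'m^'m \<Rightarrow> real^'m^'m \<Rightarrow> real^'m^'m" where
  "noise_info R Y = matrix_inv R - matrix_inv R ** matrix_inv (Y + matrix_inv R) ** matrix_inv R"

definition obs_info :: "real^'n^'m \<Rightarrow> real^'m^'m \<Rightarrow> real^'m^'m \<Rightarrow> real^'n^'n" where
  "obs_info C R Y = transpose C ** noise_info R Y ** C"

context
  fixes R Y :: "real^'m^'m"
  assumes R: "pd R" and Y: "psd Y"
begin

private lemma Ri: "pd (matrix_inv R)"
  using R by (rule pd_matrix_inv)

private lemma YRi: "pd (Y + matrix_inv R)"
  using pd_add_psd[OF Ri Y] by (simp add: add.commute)

lemma qf_noise_info:
  "qf (noise_info R Y) y = qf (matrix_inv R) y - qf (matrix_inv (Y + matrix_inv R)) (matrix_inv R *v y)"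
  using qf_transpose_sandwich[of "matrix_inv R" "matrix_inv (Y + matrix_inv R)" y] pd_sym[OF Ri]
  by (simp add: noise_info_def qf_diff)

lemma psd_noise_info: "psd (noise_info R Y)"
proof -
  have sym: "transpose (noise_info R Y) = noise_info R Y"
    using pd_sym[OF Ri] pd_sym[OF pd_matrix_inv[OF YRi]]
    by (simp add: noise_info_def transpose_diff matrix_transpose_mul matrix_mul_assoc)
  have "0 \<le> qf (matrix_inv R) y + 2 * ((matrix_inv R *v y) \<bullet> u) + qf (Y + matrix_inv R) u" for y u
    using qf_add_vec[OF pd_sym[OF Ri], of y u] pd_qf_nonneg[OF Ri, of "y + u"]
      psd_qf_nonneg[OF Y, of u] by (simp add: qf_add)
  then have "0 \<le> qf (noise_info R Y) y" for y
    using quadratic_nonneg_iff[OF YRi, of "qf (matrix_inv R) y" "matrix_inv R *v y"]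
    by (simp add: qf_noise_info)
  with sym show ?thesis
    by (simp add: psd_qf)
qed

lemma noise_info_mult: "noise_info R Y ** (mat 1 + R ** Y) = Y"
proof -
  let ?Ri = "matrix_inv R" and ?V = "matrix_inv (Y + matrix_inv R)"
  have RiZ: "?Ri ** (mat 1 + R ** Y) = ?Ri + Y"
    using matrix_inv_left[OF pd_invertible[OF R]]
    by (simp add: matrix_add_ldistrib matrix_mul_assoc)
  have V: "?V ** (?Ri + Y) = mat 1"
    using matrix_inv_left[OF pd_invertible[OF YRi]] by (simp add: add.commute)
  have "noise_info R Y ** (mat 1 + R ** Y)
      = ?Ri ** (mat 1 + R ** Y) - ?Ri ** ?V ** (?Ri ** (mat 1 + R ** Y))"
    by (simp add: noise_info_def matrix_diff_rdistrib matrix_mul_assoc)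
  also have "\<dots> = (?Ri + Y) - ?Ri ** (?V ** (?Ri + Y))"
    unfolding RiZ by (simp add: matrix_mul_assoc)
  also have "\<dots> = Y"
    unfolding V by simp
  finally show ?thesis .
qed

lemma noise_info_gain:
  assumes P: "psd P"
  defines "K \<equiv> Y ** matrix_inv (mat 1 + (P + R) ** Y)"
  shows "(mat 1 + noise_info R Y ** P) ** K = noise_info R Y"
proof -
  let ?W = "noise_info R Y" and ?Z = "mat 1 + (P + R) ** Y"
  have "pd (P + R)"
    using pd_add_psd[OF R P] by (simp add: add.commute)
  then have invZ: "invertible ?Z"
    using Y by (rule invertible_mat_1_plus)
  have WRY: "?W *v x + ?W *v (R *v (Y *v x)) = Y *v x" for x
    using arg_cong[OF noise_info_mult, of "\<lambda>M. M *v x"]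
    by (simp add: matrix_vector_mul_assoc[symmetric] matrix_vector_mult_add_rdistrib
        matrix_vector_right_distrib)
  have WPY: "(mat 1 + ?W ** P) ** Y = ?W ** ?Z"
  proof (rule matrix_eqI)
    fix x
    show "((mat 1 + ?W ** P) ** Y) *v x = (?W ** ?Z) *v x"
      using WRY[of x]
      by (simp add: matrix_vector_mul_assoc[symmetric] matrix_vector_mult_add_rdistrib
          matrix_vector_right_distrib algebra_simps)
  qed
  have "(mat 1 + ?W ** P) ** K = ((mat 1 + ?W ** P) ** Y) ** matrix_inv ?Z"
    by (simp add: K_def matrix_mul_assoc)
  also have "\<dots> = ?W ** (?Z ** matrix_inv ?Z)"
    unfolding WPY by (simp add: matrix_mul_assoc)
  finally show ?thesis
    by (simp add: matrix_inv_right[OF invZ])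
qed

lemma psd_obs_info: "psd (obs_info C R Y)"
  using psd_sandwich[OF psd_noise_info, of "transpose C"] by (simp add: obs_info_def)

lemma qf_obs_info: "qf (obs_info C R Y) x = qf (noise_info R Y) (C *v x)"
  by (simp add: obs_info_def qf_transpose_sandwich)

end


definition riccati_info :: "real^'n^'n \<Rightarrow> real^'n^'n \<Rightarrow> real \<Rightarrow> real^'n^'n \<Rightarrow> real^'n^'n \<Rightarrow> real^'n^'n" where
  "riccati_info A Q lam T X = Q + (1 - lam) *\<^sub>R (A ** X ** transpose A)
     + lam *\<^sub>R (A ** matrix_inv (matrix_inv X + T) ** transpose A)"

lemma qf_riccati_info:
  "qf (riccati_info A Q lam T X) z = qf Q z + (1 - lam) * qf X (transpose A *v z)
     + lam * qf (matrix_inv (matrix_inv X + T)) (transpose A *v z)"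
  by (simp add: riccati_info_def qf_add qf_scaleR qf_sandwich)

lemma matrix_inv_info_plus_obs_info:
  fixes X :: "real^'n^'n" and C :: "real^'n^'m" and R Y :: "real^'m^'m"
  assumes X: "pd X" and Y: "psd Y" and R: "pd R"
  defines "K \<equiv> Y ** matrix_inv (mat 1 + (C ** X ** transpose C + R) ** Y)"
  shows "matrix_inv (matrix_inv X + obs_info C R Y) = X - X ** transpose C ** K ** C ** X"
proof (rule matrix_inv_unique)
  let ?W = "noise_info R Y" and ?P = "C ** X ** transpose C"
  have WK: "K *v y + ?W *v (?P *v (K *v y)) = ?W *v y" for y
    using arg_cong[where f="\<lambda>M. M *v y", OF noise_info_gain[OF R Y psd_sandwich[OF pd_imp_psd[OF X]]]]
    by (simp add: K_def matrix_vector_mul_assoc[symmetric] matrix_vector_mult_add_rdistrib)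
  show "(matrix_inv X + obs_info C R Y) ** (X - X ** transpose C ** K ** C ** X) = mat 1"
  proof (rule matrix_eqI)
    fix x
    let ?y = "C *v (X *v x)"
    have "((matrix_inv X + obs_info C R Y) ** (X - X ** transpose C ** K ** C ** X)) *v x
       = x + transpose C *v (?W *v ?y - K *v ?y - ?W *v (?P *v (K *v ?y)))"
      unfolding obs_info_def
      by (simp add: matrix_vector_mul_assoc[symmetric] matrix_vector_mult_add_rdistrib
          matrix_vector_mult_diff_rdistrib matrix_vector_mult_diff_distrib
          matrix_inv_mult_vec(2)[OF pd_invertible[OF X]])
    also have "\<dots> = x"
      using WK[of ?y] by (simp add: diff_diff_eq)
    finally show "((matrix_inv X + obs_info C R Y) ** (X - X ** transpose C ** K ** C ** X)) *v x
        = mat 1 *v x"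
      by simp
  qed
qed

lemma g_ol_info_form:
  assumes "pd X" "psd Y" "pd R"
  shows "g_ol A C Q lam R Y X = riccati_info A Q lam (obs_info C R Y) X"
proof (rule matrix_eqI)
  fix x
  show "g_ol A C Q lam R Y X *v x = riccati_info A Q lam (obs_info C R Y) X *v x"
    unfolding riccati_info_def matrix_inv_info_plus_obs_info[OF assms] g_ol_def
    by (simp add: matrix_vector_mul_assoc[symmetric] matrix_vector_mult_add_rdistrib
        matrix_vector_mult_diff_rdistrib scaleR_matrix_vector_assoc[symmetric]
        matrix_vector_mult_diff_distrib algebra_simps)
qed

section \<open>The matrix inequality \<open>\<Psi>(S, Y) \<ge> 0\<close>\<close>

lemma qf_Psi:
  fixes A S :: "real^'n^'n" and C :: "real^'n^'m" and x1 :: "real^'n"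
  assumes symS: "transpose S = S" and symRi: "transpose (matrix_inv R) = matrix_inv R"
  defines "v \<equiv> transpose A *v (S *v x1)"
  shows "qf (Psi A C Q R lam S Y) (join x1 (join x2 (join x3 (join x4 x5)))) =
    qf S x1
    + (2 * ((sqrt lam *\<^sub>R v) \<bullet> x2) + qf (S + transpose C ** matrix_inv R ** C) x2
       + 2 * ((matrix_inv R *v (C *v x2)) \<bullet> x5) + qf (Y + matrix_inv R) x5)
    + (2 * ((sqrt (1 - lam) *\<^sub>R v) \<bullet> x3) + qf S x3)
    + (2 * ((S *v x1) \<bullet> x4) + qf (matrix_inv Q) x4)"
proof -
  let ?Ri = "matrix_inv R"
  have SA: "x1 \<bullet> ((c *\<^sub>R (S ** A)) *v x) = (c *\<^sub>R v) \<bullet> x" for c x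
  proof -
    have "x1 \<bullet> ((c *\<^sub>R (S ** A)) *v x) = c * (x1 \<bullet> (S *v (A *v x)))"
      by (simp add: scaleR_matrix_vector_assoc[symmetric] matrix_vector_mul_assoc[symmetric])
    also have "x1 \<bullet> (S *v (A *v x)) = (S *v x1) \<bullet> (A *v x)"
      by (rule inner_matrix_sym[OF symS])
    also have "\<dots> = v \<bullet> x"
      unfolding v_def by (rule inner_matrix_transpose)
    finally show ?thesis by simp
  qed
  have AS: "y \<bullet> ((c *\<^sub>R (transpose A ** S)) *v x1) = (c *\<^sub>R v) \<bullet> y" for c y
    by (simp add: v_def scaleR_matrix_vector_assoc[symmetric] matrix_vector_mul_assoc[symmetric]
        inner_commute)
  have CR: "x2 \<bullet> ((transpose C ** ?Ri) *v x5) = (?Ri *v (C *v x2)) \<bullet> x5"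
  proof -
    have "x2 \<bullet> ((transpose C ** ?Ri) *v x5) = (C *v x2) \<bullet> (?Ri *v x5)"
      by (simp add: matrix_vector_mul_assoc[symmetric] inner_matrix_transpose)
    also have "\<dots> = (?Ri *v (C *v x2)) \<bullet> x5"
      by (rule inner_matrix_sym[OF symRi])
    finally show ?thesis .
  qed
  have RC: "x5 \<bullet> ((?Ri ** C) *v x2) = (?Ri *v (C *v x2)) \<bullet> x5"
    by (simp add: matrix_vector_mul_assoc[symmetric] inner_commute)
  have S14: "x1 \<bullet> (S *v x4) = (S *v x1) \<bullet> x4" "x4 \<bullet> (S *v x1) = (S *v x1) \<bullet> x4"
    by (rule inner_matrix_sym[OF symS], rule inner_commute)
  show ?thesis
    unfolding qf_def Psi_def Let_def vcat_mult hcat_mult_join inner_join inner_add_right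
    by (simp add: SA AS CR RC S14)
qed

lemma transpose_Psi:
  fixes A S Q :: "real^'n^'n" and C :: "real^'n^'m" and R Y :: "real^'m^'m"
  assumes "transpose S = S" "transpose Y = Y" "pd R" "pd Q"
  shows "transpose (Psi A C Q R lam S Y) = Psi A C Q R lam S Y"
proof -
  have Ri: "transpose (matrix_inv R) = matrix_inv R" and Qi: "transpose (matrix_inv Q) = matrix_inv Q"
    using assms(3,4) by (simp_all add: pd_sym pd_matrix_inv)
  show ?thesis
    unfolding Psi_def Let_def
    by (simp add: transpose_vcat transpose_hcat hcat_vcat transpose_scalar transpose_add
        matrix_transpose_mul matrix_mul_assoc assms(1,2) Ri Qi)
qed

lemma obs_info_min:
  fixes C :: "real^'n^'m" and x :: "real^'n"
  assumes R: "pd R" and Y: "psd Y"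
  defines "b \<equiv> matrix_inv R *v (C *v x)"
  shows "qf (obs_info C R Y) x
      \<le> qf (transpose C ** matrix_inv R ** C) x + 2 * (b \<bullet> u) + qf (Y + matrix_inv R) u"
    and "\<exists>u. qf (transpose C ** matrix_inv R ** C) x + 2 * (b \<bullet> u)
      + qf (Y + matrix_inv R) u = qf (obs_info C R Y) x"
proof -
  have YRi: "pd (Y + matrix_inv R)"
    using pd_add_psd[OF pd_matrix_inv[OF R] Y] by (simp add: add.commute)
  have T: "qf (obs_info C R Y) x = qf (transpose C ** matrix_inv R ** C) x
      - qf (matrix_inv (Y + matrix_inv R)) b"
    by (simp add: b_def qf_obs_info[OF R Y] qf_noise_info[OF R Y] qf_transpose_sandwich)
  show "qf (obs_info C R Y) x
      \<le> qf (transpose C ** matrix_inv R ** C) x + 2 * (b \<bullet> u) + qf (Y + matrix_inv R) u"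
    using T quadratic_ge_min[OF YRi, of b u] by linarith
  obtain u where "2 * (b \<bullet> u) + qf (Y + matrix_inv R) u = - qf (matrix_inv (Y + matrix_inv R)) b"
    using quadratic_min_attained[OF YRi] by blast
  then show "\<exists>u. qf (transpose C ** matrix_inv R ** C) x + 2 * (b \<bullet> u)
      + qf (Y + matrix_inv R) u = qf (obs_info C R Y) x"
    using T by (intro exI[of _ u]) linarith
qed

text \<open>The minimum of the quadratic form of \<open>\<Psi>(S, Y)\<close> over \<open>x\<^sub>2, \<dots>, x\<^sub>5\<close>, taken block by
  block: first \<open>x\<^sub>5\<close> (which turns \<open>C\<^sup>T R\<^sup>-\<^sup>1 C\<close> into \<open>obs_info\<close>), then \<open>x\<^sub>2\<close>, \<open>x\<^sub>3\<close>, \<open>x\<^sub>4\<close>.\<close>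

lemma qf_Psi_min:
  fixes A S Q :: "real^'n^'n" and C :: "real^'n^'m" and R Y :: "real^'m^'m" and x1 :: "real^'n"
  assumes S: "pd S" and Y: "psd Y" and R: "pd R" and Q: "pd Q" and lam: "0 \<le> lam" "lam \<le> 1"
  defines "v \<equiv> transpose A *v (S *v x1)"
  defines "m \<equiv> qf S x1 - lam * qf (matrix_inv (S + obs_info C R Y)) v
    - (1 - lam) * qf (matrix_inv S) v - qf Q (S *v x1)"
  shows "m \<le> qf (Psi A C Q R lam S Y) (join x1 (join x2 (join x3 (join x4 x5))))"
    and "\<exists>x2 x3 x4 x5. qf (Psi A C Q R lam S Y) (join x1 (join x2 (join x3 (join x4 x5)))) = m"
proof -
  let ?T = "obs_info C R Y"
  have ST: "pd (S + ?T)"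
    using pd_add_psd[OF S psd_obs_info[OF R Y]] .
  have Qi: "pd (matrix_inv Q)" and QQ: "matrix_inv (matrix_inv Q) = Q"
    using Q by (simp_all add: pd_matrix_inv matrix_inv_inv pd_invertible)
  have Psi: "qf (Psi A C Q R lam S Y) (join x1 (join x2 (join x3 (join x4 x5)))) = qf S x1
    + (2 * ((sqrt lam *\<^sub>R v) \<bullet> x2) + qf (S + transpose C ** matrix_inv R ** C) x2
       + 2 * ((matrix_inv R *v (C *v x2)) \<bullet> x5) + qf (Y + matrix_inv R) x5)
    + (2 * ((sqrt (1 - lam) *\<^sub>R v) \<bullet> x3) + qf S x3)
    + (2 * ((S *v x1) \<bullet> x4) + qf (matrix_inv Q) x4)" for x2 x3 x4 x5
    unfolding v_def using S R by (intro qf_Psi) (simp_all add: pd_sym pd_matrix_inv)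
  have min2: "- lam * qf (matrix_inv (S + ?T)) v = - qf (matrix_inv (S + ?T)) (sqrt lam *\<^sub>R v)"
    and min3: "- (1 - lam) * qf (matrix_inv S) v = - qf (matrix_inv S) (sqrt (1 - lam) *\<^sub>R v)"
    using lam by (simp_all add: qf_scaleR_vec algebra_simps)
  note noise = obs_info_min[OF R Y, of C]
  show "m \<le> qf (Psi A C Q R lam S Y) (join x1 (join x2 (join x3 (join x4 x5))))"
    using Psi[of x2 x3 x4 x5] noise(1)[of x2 x5] qf_add[of S ?T x2]
      qf_add[of S "transpose C ** matrix_inv R ** C" x2]
      quadratic_ge_min[OF ST, of "sqrt lam *\<^sub>R v" x2]
      quadratic_ge_min[OF S, of "sqrt (1 - lam) *\<^sub>R v" x3]
      quadratic_ge_min[OF Qi, of "S *v x1" x4] min2 min3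
    unfolding m_def QQ by linarith
  obtain x2 where x2: "2 * ((sqrt lam *\<^sub>R v) \<bullet> x2) + qf (S + ?T) x2
      = - qf (matrix_inv (S + ?T)) (sqrt lam *\<^sub>R v)"
    using quadratic_min_attained[OF ST] by blast
  obtain x3 where x3: "2 * ((sqrt (1 - lam) *\<^sub>R v) \<bullet> x3) + qf S x3
      = - qf (matrix_inv S) (sqrt (1 - lam) *\<^sub>R v)"
    using quadratic_min_attained[OF S] by blast
  obtain x4 where x4: "2 * ((S *v x1) \<bullet> x4) + qf (matrix_inv Q) x4 = - qf Q (S *v x1)"
    using quadratic_min_attained[OF Qi, of "S *v x1"] unfolding QQ by blast
  obtain x5 where x5: "qf (transpose C ** matrix_inv R ** C) x2
      + 2 * ((matrix_inv R *v (C *v x2)) \<bullet> x5) + qf (Y + matrix_inv R) x5 = qf ?T x2"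
    using noise(2) by blast
  have "qf (Psi A C Q R lam S Y) (join x1 (join x2 (join x3 (join x4 x5)))) = m"
    using Psi[of x2 x3 x4 x5] x2 x3 x4 x5 min2 min3 qf_add[of S ?T x2]
      qf_add[of S "transpose C ** matrix_inv R ** C" x2]
    unfolding m_def by linarith
  then show "\<exists>x2 x3 x4 x5. qf (Psi A C Q R lam S Y) (join x1 (join x2 (join x3 (join x4 x5)))) = m"
    by blast
qed

lemma psd_Psi_iff:
  fixes A S Q :: "real^'n^'n" and C :: "real^'n^'m" and R Y :: "real^'m^'m"
  assumes S: "pd S" and Y: "psd Y" and R: "pd R" and Q: "pd Q" and lam: "0 \<le> lam" "lam \<le> 1"
  shows "psd (Psi A C Q R lam S Y) \<longleftrightarrow>
    (\<forall>z. qf (riccati_info A Q lam (obs_info C R Y) (matrix_inv S)) z \<le> qf (matrix_inv S) z)"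
proof -
  let ?T = "obs_info C R Y" and ?Si = "matrix_inv S"
  let ?m = "\<lambda>x1. qf S x1 - lam * qf (matrix_inv (S + ?T)) (transpose A *v (S *v x1))
    - (1 - lam) * qf ?Si (transpose A *v (S *v x1)) - qf Q (S *v x1)"
  have inv: "invertible S"
    using S by (rule pd_invertible)
  note min = qf_Psi_min[OF S Y R Q lam]
  have "(\<forall>x2 x3 x4 x5. 0 \<le> qf (Psi A C Q R lam S Y) (join x1 (join x2 (join x3 (join x4 x5)))))
      \<longleftrightarrow> 0 \<le> ?m x1" for x1
  proof
    assume "\<forall>x2 x3 x4 x5. 0 \<le> qf (Psi A C Q R lam S Y) (join x1 (join x2 (join x3 (join x4 x5))))"
    moreover obtain x2 x3 x4 x5
      where "qf (Psi A C Q R lam S Y) (join x1 (join x2 (join x3 (join x4 x5)))) = ?m x1"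
      using min(2) by blast
    ultimately show "0 \<le> ?m x1"
      by metis
  qed (use min(1) in \<open>blast intro: order.trans\<close>)
  then have "psd (Psi A C Q R lam S Y) \<longleftrightarrow> (\<forall>x1. 0 \<le> ?m x1)"
    unfolding psd_qf by (simp only: all_join transpose_Psi[OF pd_sym[OF S] psd_sym[OF Y] R Q] simp_thms)
  also have "\<dots> \<longleftrightarrow> (\<forall>z. 0 \<le> ?m (?Si *v z))"
    by (metis matrix_inv_mult_vec(2)[OF inv])
  also have "\<dots> \<longleftrightarrow> (\<forall>z. qf (riccati_info A Q lam ?T ?Si) z \<le> qf ?Si z)"
  proof -
    have "qf S (?Si *v z) = qf ?Si z" for z
      by (simp add: qf_def matrix_inv_mult_vec(1)[OF inv] inner_commute)
    then have "?m (?Si *v z) = qf ?Si z - qf (riccati_info A Q lam ?T ?Si) z" for z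
      by (simp add: qf_riccati_info matrix_inv_mult_vec(1)[OF inv] matrix_inv_inv[OF inv]
          algebra_simps)
    then show ?thesis
      by simp
  qed
  finally show ?thesis .
qed

section \<open>Fixed points of monotone concave maps\<close>

lemma pd_dominates:
  assumes "pd Q"
  obtains e where "0 < e" "e \<le> 1" "\<And>z. e * qf X z \<le> qf Q z"
proof -
  obtain q where q: "0 < q" "\<And>z. q * (z \<bullet> z) \<le> qf Q z"
    using pd_qf_ge_norm[OF assms] by blast
  obtain c where c: "\<And>z. qf X z \<le> c * (z \<bullet> z)"
    using qf_le_norm_bound by blast
  define e where "e = min 1 (q / max c 1)"
  have e: "0 < e" "e \<le> 1" "e * max c 1 \<le> q"
    using q(1) by (auto simp: e_def min_def field_simps)
  have "e * qf X z \<le> qf Q z" for z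
  proof -
    have "qf X z \<le> max c 1 * (z \<bullet> z)"
      using c[of z] mult_right_mono[of c "max c 1" "z \<bullet> z"] by simp
    then have "e * qf X z \<le> (e * max c 1) * (z \<bullet> z)"
      using e(1) mult_left_mono[of _ _ e] by (simp add: mult.assoc)
    also have "\<dots> \<le> q * (z \<bullet> z)"
      using e(3) by (simp add: mult_right_mono)
    finally show ?thesis
      using q(2)[of z] by linarith
  qed
  then show ?thesis
    using that e(1,2) by blast
qed

lemma qf_tendsto:
  fixes X :: "nat \<Rightarrow> real^'n^'n"
  assumes "\<And>i j. (\<lambda>k. X k $ i $ j) \<longlonglongrightarrow> L $ i $ j"
  shows "(\<lambda>k. qf (X k) z) \<longlonglongrightarrow> qf L z"
  unfolding qf_entries by (intro tendsto_intros assms)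

lemma qf_eventually_le:
  fixes X :: "nat \<Rightarrow> real^'n^'n"
  assumes "\<And>i j. (\<lambda>k. X k $ i $ j) \<longlonglongrightarrow> L $ i $ j" and "0 < e"
  obtains N where "\<And>z. qf (X N) z \<le> qf L z + e * (z \<bullet> z)"
proof -
  define d where "d k = (\<Sum>i\<in>UNIV. \<Sum>j\<in>UNIV. \<bar>(X k - L) $ i $ j\<bar>)" for k
  have "d \<longlonglongrightarrow> (\<Sum>i\<in>UNIV. \<Sum>j\<in>(UNIV :: 'n set). \<bar>L $ i $ j - L $ i $ j\<bar>)"
    unfolding d_def vector_minus_component by (intro tendsto_intros assms)
  then have "eventually (\<lambda>k. d k < e) sequentially"
    using assms(2) by (intro order_tendstoD(2)) simp_all
  then obtain N where N: "d N < e"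
    unfolding eventually_sequentially by blast
  have "qf (X N) z \<le> qf L z + e * (z \<bullet> z)" for z
  proof -
    have "qf (X N) z \<le> qf L z + d N * (z \<bullet> z)"
      using abs_qf_le[of "X N - L" z] unfolding d_def qf_diff by linarith
    moreover have "d N * (z \<bullet> z) \<le> e * (z \<bullet> z)"
      using N by (intro mult_right_mono) simp_all
    ultimately show ?thesis
      by linarith
  qed
  then show ?thesis
    using that by blast
qed

lemma decreasing_matrix_limit:
  fixes X :: "nat \<Rightarrow> real^'n^'n"
  assumes sym: "\<And>k. transpose (X k) = X k"
    and decr: "\<And>k z. qf (X (Suc k)) z \<le> qf (X k) z"
    and nonneg: "\<And>k z. 0 \<le> qf (X k) z"
  obtains L where "transpose L = L" "\<And>i j. (\<lambda>k. X k $ i $ j) \<longlonglongrightarrow> L $ i $ j"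
proof -
  have "\<exists>l. (\<lambda>k. qf (X k) z) \<longlonglongrightarrow> l" for z
  proof -
    have "decseq (\<lambda>k. qf (X k) z)"
      using decr by (intro decseq_SucI)
    then show ?thesis
      using decseq_convergent[of _ 0] nonneg by blast
  qed
  then obtain l where l: "\<And>z. (\<lambda>k. qf (X k) z) \<longlonglongrightarrow> l z"
    by metis
  have "(\<lambda>k. X k $ i $ j) \<longlonglongrightarrow> (l (axis i 1 + axis j 1) - l (axis i 1) - l (axis j 1)) / 2" for i j
    unfolding entry_polarization[OF sym] by (intro tendsto_intros l) simp
  then have "convergent (\<lambda>k. X k $ i $ j)" for i j
    by (rule convergentI)
  then have conv: "(\<lambda>k. X k $ i $ j) \<longlonglongrightarrow> (\<chi> i j. lim (\<lambda>k. X k $ i $ j)) $ i $ j" for i j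
    by (simp add: convergent_LIMSEQ_iff)
  moreover have "transpose (\<chi> i j. lim (\<lambda>k. X k $ i $ j)) = (\<chi> i j. lim (\<lambda>k. X k $ i $ j))"
  proof -
    have "X k $ j $ i = X k $ i $ j" for k i j
      using arg_cong[OF sym[of k], of "\<lambda>N. N $ i $ j"] by (simp add: transpose_def)
    then show ?thesis
      by (simp add: transpose_def vec_eq_iff)
  qed
  ultimately show ?thesis
    using that by blast
qed

text \<open>\<open>Q\<close> plays the role of \<open>G(0)\<close>: \<open>G_scale\<close> is concavity of \<open>G\<close> on the segment from
  \<open>0\<close> to \<open>X\<close>.\<close>

locale monotone_concave_map =
  fixes G :: "real^'n^'n \<Rightarrow> real^'n^'n" and Q :: "real^'n^'n"
  assumes pd_Q: "pd Q"
    and G_sym: "\<And>X. pd X \<Longrightarrow> transpose (G X) = G X"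
    and Q_le_G: "\<And>X z. pd X \<Longrightarrow> qf Q z \<le> qf (G X) z"
    and G_mono: "\<And>X X' z. pd X \<Longrightarrow> pd X' \<Longrightarrow> (\<And>z. qf X z \<le> qf X' z) \<Longrightarrow> qf (G X) z \<le> qf (G X') z"
    and G_scale: "\<And>X t z. pd X \<Longrightarrow> 0 < t \<Longrightarrow> t \<le> 1 \<Longrightarrow>
      t * qf (G X) z + (1 - t) * qf Q z \<le> qf (G (t *\<^sub>R X)) z"
begin

lemma pd_of_Q_le:
  assumes "transpose X = X" "\<And>z. qf Q z \<le> qf X z"
  shows "pd X"
  unfolding pd_qf
proof (intro conjI allI impI)
  fix z :: "real^'n" assume "z \<noteq> 0"
  then have "0 < qf Q z"
    using pd_Q by (simp add: pd_qf)
  then show "0 < qf X z"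
    using assms(2)[of z] by linarith
qed (rule assms(1))

lemma pd_G:
  assumes "pd X"
  shows "pd (G X)"
  by (rule pd_of_Q_le[OF G_sym[OF assms] Q_le_G[OF assms]])

lemma scaled_fixed_point_le_step:
  assumes X: "pd X" "G X = X" and e: "\<And>z. e * qf X z \<le> qf Q z"
    and P: "pd P" "\<And>z. qf (G P) z \<le> qf P z"
    and s: "0 < s" "s \<le> 1" "\<And>z. s * qf X z \<le> qf P z"
  shows "(s + (1 - s) * e) * qf X z \<le> qf P z"
proof -
  have "(s + (1 - s) * e) * qf X z = s * qf (G X) z + (1 - s) * (e * qf X z)"
    using X(2) by (simp add: algebra_simps)
  also have "\<dots> \<le> s * qf (G X) z + (1 - s) * qf Q z"
    using e[of z] s mult_left_mono[of "e * qf X z" "qf Q z" "1 - s"] by simp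
  also have "\<dots> \<le> qf (G (s *\<^sub>R X)) z"
    using G_scale[OF X(1) s(1,2)] .
  also have "\<dots> \<le> qf (G P) z"
    using s(3) pd_scaleR[OF X(1) s(1)] P(1) by (intro G_mono) (simp_all add: qf_scaleR)
  also have "\<dots> \<le> qf P z"
    using P(2) .
  finally show ?thesis .
qed

text \<open>With \<open>e X \<le> Q\<close>, induction gives \<open>t\<^sub>k X \<le> P\<close> for \<open>t\<^sub>0 = e\<close>, \<open>t\<^sub>k\<^sub>+\<^sub>1 = t\<^sub>k + (1 - t\<^sub>k) e\<close>,
  and \<open>t\<^sub>k \<longrightarrow> 1\<close>.\<close>

lemma fixed_point_le_supersolution:
  assumes X: "pd X" "G X = X" and P: "pd P" "\<And>z. qf (G P) z \<le> qf P z"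
  shows "qf X z \<le> qf P z"
proof -
  obtain e where e: "0 < e" "e \<le> 1" "\<And>z. e * qf X z \<le> qf Q z"
    using pd_dominates[OF pd_Q] by blast
  define t where "t k = 1 - (1 - e) ^ Suc k" for k
  have t: "0 < t k" "t k \<le> 1" for k
  proof -
    have "(1 - e) ^ Suc k \<le> 1 - e"
      using e power_le_one[of "1 - e" k] mult_left_le[of "(1 - e) ^ k" "1 - e"] by simp
    then show "0 < t k" "t k \<le> 1"
      using e by (simp_all add: t_def)
  qed
  have "t k * qf X z \<le> qf P z" for k z
  proof (induction k arbitrary: z)
    case 0
    have "t 0 * qf X z \<le> qf Q z"
      using e(3) by (simp add: t_def)
    also have "\<dots> \<le> qf (G P) z"
      using Q_le_G[OF P(1)] .
    finally show ?case
      using P(2) order.trans by blast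
  next
    case (Suc k)
    have "t (Suc k) = t k + (1 - t k) * e"
      by (simp add: t_def algebra_simps)
    then show ?case
      using scaled_fixed_point_le_step[OF X e(3) P t Suc.IH] by simp
  qed
  moreover have "(\<lambda>k. (1 - e) ^ Suc k) \<longlonglongrightarrow> 0"
    using e by (intro LIMSEQ_Suc LIMSEQ_realpow_zero) auto
  then have "(\<lambda>k. t k * qf X z) \<longlonglongrightarrow> (1 - 0) * qf X z"
    unfolding t_def by (rule tendsto_mult_right[OF tendsto_diff[OF tendsto_const]])
  ultimately show ?thesis
    by (intro LIMSEQ_le_const2[of "\<lambda>k. t k * qf X z"]) auto
qed

lemma fixed_point_unique:
  assumes "pd X" "G X = X" "pd X'" "G X' = X'"
  shows "X = X'"
proof (rule symmetric_eqI)
  show "transpose X = X" "transpose X' = X'"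
    using assms(1,3) by (simp_all add: pd_sym)
  show "qf X z = qf X' z" for z
    using fixed_point_le_supersolution[of X X' z] fixed_point_le_supersolution[of X' X z] assms
    by simp
qed

lemma le_G_if_le_G_scaled:
  assumes X: "pd X" and le: "\<And>t z. 0 < t \<Longrightarrow> t < 1 \<Longrightarrow> qf X z \<le> qf (G ((1 / t) *\<^sub>R X)) z"
  shows "qf X z \<le> qf (G X) z"
proof (rule field_le_mult_one_interval)
  fix t :: real assume t: "0 < t" "t < 1"
  have "t * qf X z \<le> t * qf (G ((1 / t) *\<^sub>R X)) z"
    using le[OF t] t by simp
  also have "\<dots> \<le> qf (G X) z - (1 - t) * qf Q z"
    using G_scale[OF pd_scaleR[OF X, of "1 / t"], of t z] t by simp
  also have "\<dots> \<le> qf (G X) z"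
    using pd_qf_nonneg[OF pd_Q, of z] t by simp
  finally show "t * qf X z \<le> qf (G X) z" .
qed

lemma iterates_decreasing:
  assumes P: "pd P" "\<And>z. qf (G P) z \<le> qf P z"
  shows "pd ((G ^^ k) P)" and "qf ((G ^^ Suc k) P) z \<le> qf ((G ^^ k) P) z"
    and "qf Q z \<le> qf ((G ^^ k) P) z"
proof -
  have *: "pd ((G ^^ k) P) \<and> (\<forall>z. qf ((G ^^ Suc k) P) z \<le> qf ((G ^^ k) P) z)" for k
  proof (induction k)
    case 0
    show ?case
      using P by simp
  next
    case (Suc k)
    then have "pd ((G ^^ Suc k) P)"
      by (simp add: pd_G)
    moreover have "qf (G ((G ^^ Suc k) P)) z \<le> qf (G ((G ^^ k) P)) z" for z
      using Suc calculation by (intro G_mono) simp_all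
    ultimately show ?case
      by simp
  qed
  then show "pd ((G ^^ k) P)" "qf ((G ^^ Suc k) P) z \<le> qf ((G ^^ k) P) z"
    by blast+
  show "qf Q z \<le> qf ((G ^^ k) P) z"
  proof (cases k)
    case 0
    then show ?thesis
      using Q_le_G[OF P(1), of z] P(2)[of z] by simp
  next
    case (Suc k')
    then show ?thesis
      using Q_le_G[of "(G ^^ k') P"] * by simp
  qed
qed

text \<open>Monotonicity gives \<open>G(L) \<le> L\<close>; conversely the iterates eventually lie below \<open>L / t\<close>, whence \<open>L \<le> G(L / t)\<close>,
  and \<open>G_scale\<close> turns this into \<open>t L \<le> G(L)\<close> for all \<open>t < 1\<close>.\<close>

lemma limit_of_iterates_fixed_point:
  assumes Xs: "\<And>k. pd (Xs k)" "\<And>k. Xs (Suc k) = G (Xs k)"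
    and L: "pd L" "\<And>i j. (\<lambda>k. Xs k $ i $ j) \<longlonglongrightarrow> L $ i $ j" "\<And>k z. qf L z \<le> qf (Xs k) z"
  shows "G L = L"
proof (rule symmetric_eqI)
  have "qf (G L) z \<le> qf (Xs (Suc k)) z" for k z
    unfolding Xs(2) by (rule G_mono[OF L(1) Xs(1) L(3)])
  then have GL_le: "qf (G L) z \<le> qf L z" for z
    using LIMSEQ_le_const[OF LIMSEQ_Suc[OF qf_tendsto[OF L(2)]]] by blast
  obtain q where q: "0 < q" "\<And>z. q * (z \<bullet> z) \<le> qf L z"
    using pd_qf_ge_norm[OF L(1)] by blast
  have "qf L z \<le> qf (G ((1 / t) *\<^sub>R L)) z" if t: "0 < t" "t < 1" for t z
  proof -
    have t': "0 < 1 / t" "0 \<le> 1 / t - 1"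
      using t by simp_all
    then have pos: "0 < q * (1 / t - 1)"
      using q(1) t by simp
    obtain N where N: "\<And>z. qf (Xs N) z \<le> qf L z + q * (1 / t - 1) * (z \<bullet> z)"
      by (rule qf_eventually_le[OF L(2) pos]) blast
    have "qf (Xs N) w \<le> qf ((1 / t) *\<^sub>R L) w" for w
    proof -
      have "(1 / t - 1) * (q * (w \<bullet> w)) \<le> (1 / t - 1) * qf L w"
        by (rule mult_left_mono[OF q(2) t'(2)])
      moreover have "qf ((1 / t) *\<^sub>R L) w = qf L w + (1 / t - 1) * qf L w"
        by (simp add: qf_scaleR algebra_simps)
      ultimately show ?thesis
        using N[of w] by (simp add: ac_simps)
    qed
    then have "qf (G (Xs N)) z \<le> qf (G ((1 / t) *\<^sub>R L)) z"
      by (rule G_mono[OF Xs(1) pd_scaleR[OF L(1) t'(1)]])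
    then show ?thesis
      using L(3)[of z "Suc N"] by (simp add: Xs(2))
  qed
  then have LG_le: "qf L z \<le> qf (G L) z" for z
    by (rule le_G_if_le_G_scaled[OF L(1)])
  show "qf (G L) z = qf L z" for z
    using GL_le LG_le by (rule order.antisym)
  show "transpose (G L) = G L" "transpose L = L"
    using L(1) by (simp_all add: G_sym pd_sym)
qed

lemma fixed_point_exists:
  assumes P: "pd P" "\<And>z. qf (G P) z \<le> qf P z"
  obtains X where "pd X" "G X = X" "\<And>z. qf X z \<le> qf P z"
proof -
  note Xs = iterates_decreasing[OF P]
  have "0 \<le> qf ((G ^^ k) P) z" for k z
    using Xs(3)[of z k] pd_qf_nonneg[OF pd_Q, of z] by linarith
  then obtain L where L: "transpose L = L" "\<And>i j. (\<lambda>k. (G ^^ k) P $ i $ j) \<longlonglongrightarrow> L $ i $ j"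
    using decreasing_matrix_limit[of "\<lambda>k. (G ^^ k) P", OF pd_sym[OF Xs(1)] Xs(2)] by blast
  have L_le: "qf L z \<le> qf ((G ^^ k) P) z" for k z
    by (rule decseq_ge[OF decseq_SucI[of "\<lambda>k. qf ((G ^^ k) P) z", OF Xs(2)] qf_tendsto[OF L(2)]])
  have "qf Q z \<le> qf L z" for z
    using LIMSEQ_le_const[OF qf_tendsto[OF L(2)]] Xs(3) by blast
  then have pdL: "pd L"
    using L(1) by (intro pd_of_Q_le)
  have "G L = L"
    by (rule limit_of_iterates_fixed_point[OF Xs(1) _ pdL L(2) L_le]) simp
  moreover have "qf L z \<le> qf P z" for z
    using L_le[of z 0] by simp
  ultimately show ?thesis
    using that pdL by blast
qed

end


lemma pd_matrix_inv_info:
  assumes "pd X" "psd T"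
  shows "pd (matrix_inv (matrix_inv X + T))"
  using assms by (intro pd_matrix_inv pd_add_psd)

lemma matrix_inv_info_mono:
  assumes X: "pd X" "pd X'" "\<And>x. qf X x \<le> qf X' x" and T: "psd T"
  shows "qf (matrix_inv (matrix_inv X + T)) w \<le> qf (matrix_inv (matrix_inv X' + T)) w"
proof (rule qf_matrix_inv_antimono)
  show "pd (matrix_inv X' + T)" "pd (matrix_inv X + T)"
    using X T by (simp_all add: pd_add_psd pd_matrix_inv)
  show "qf (matrix_inv X' + T) x \<le> qf (matrix_inv X + T) x" for x
    using qf_matrix_inv_antimono[OF X] by (simp add: qf_add)
qed

lemma matrix_inv_info_scale:
  assumes X: "pd X" and T: "psd T" and t: "0 < t" "t \<le> 1"
  shows "t * qf (matrix_inv (matrix_inv X + T)) w \<le> qf (matrix_inv (matrix_inv (t *\<^sub>R X) + T)) w"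
proof -
  have Xi: "pd (matrix_inv X)"
    using X by (rule pd_matrix_inv)
  have t': "0 < 1 / t"
    using t by simp
  have "qf ((1 / t) *\<^sub>R matrix_inv X + T) x \<le> qf ((1 / t) *\<^sub>R (matrix_inv X + T)) x" for x
  proof -
    have "qf T x \<le> (1 / t) * qf T x"
      using mult_right_mono[of 1 "1 / t" "qf T x"] psd_qf_nonneg[OF T, of x] t by simp
    then show ?thesis
      by (simp add: qf_add qf_scaleR distrib_left)
  qed
  then have "qf (matrix_inv ((1 / t) *\<^sub>R (matrix_inv X + T))) w
      \<le> qf (matrix_inv ((1 / t) *\<^sub>R matrix_inv X + T)) w"
    by (rule qf_matrix_inv_antimono[OF pd_add_psd[OF pd_scaleR[OF Xi t'] T]
          pd_scaleR[OF pd_add_psd[OF Xi T] t']])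
  then show ?thesis
    using t by (simp add: matrix_inv_scaleR pd_invertible[OF X] pd_invertible[OF pd_add_psd[OF Xi T]]
        qf_scaleR)
qed

lemma riccati_info_monotone_concave:
  fixes A Q T :: "real^'n^'n"
  assumes Q: "pd Q" and T: "psd T" and lam: "0 \<le> lam" "lam \<le> 1"
  shows "monotone_concave_map (riccati_info A Q lam T) Q"
proof
  fix X :: "real^'n^'n" and z
  assume X: "pd X"
  show "transpose (riccati_info A Q lam T X) = riccati_info A Q lam T X"
    using pd_sym[OF Q] pd_sym[OF X] pd_sym[OF pd_matrix_inv_info[OF X T]]
    by (simp add: riccati_info_def transpose_add transpose_scalar transpose_sandwich)
  show "qf Q z \<le> qf (riccati_info A Q lam T X) z"
    using pd_qf_nonneg[OF X] pd_qf_nonneg[OF pd_matrix_inv_info[OF X T]] lam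
    by (simp add: qf_riccati_info)
next
  fix X X' :: "real^'n^'n" and z
  assume X: "pd X" "pd X'" "\<And>z. qf X z \<le> qf X' z"
  have "(1 - lam) * qf X (transpose A *v z) \<le> (1 - lam) * qf X' (transpose A *v z)"
    using X(3) lam by (intro mult_left_mono) simp_all
  moreover have "lam * qf (matrix_inv (matrix_inv X + T)) (transpose A *v z)
      \<le> lam * qf (matrix_inv (matrix_inv X' + T)) (transpose A *v z)"
    using matrix_inv_info_mono[OF X T] lam by (intro mult_left_mono) simp_all
  ultimately show "qf (riccati_info A Q lam T X) z \<le> qf (riccati_info A Q lam T X') z"
    unfolding qf_riccati_info by linarith
next
  fix X :: "real^'n^'n" and t :: real and z
  assume X: "pd X" and t: "0 < t" "t \<le> 1"
  let ?w = "transpose A *v z"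
  have "lam * (t * qf (matrix_inv (matrix_inv X + T)) ?w)
      \<le> lam * qf (matrix_inv (matrix_inv (t *\<^sub>R X) + T)) ?w"
    using matrix_inv_info_scale[OF X T t] lam by (intro mult_left_mono) simp_all
  moreover have "t * qf (riccati_info A Q lam T X) z + (1 - t) * qf Q z
      = qf Q z + (1 - lam) * qf (t *\<^sub>R X) ?w + lam * (t * qf (matrix_inv (matrix_inv X + T)) ?w)"
    by (simp add: qf_riccati_info qf_scaleR algebra_simps)
  ultimately show "t * qf (riccati_info A Q lam T X) z + (1 - t) * qf Q z
      \<le> qf (riccati_info A Q lam T (t *\<^sub>R X)) z"
    unfolding qf_riccati_info[of _ _ _ _ "t *\<^sub>R X"] by linarith
qed (rule Q)

lemma riccati_info_le_lyapunov:
  assumes P: "pd P" and T: "psd T" and lam: "0 \<le> lam"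
  shows "qf (riccati_info A Q lam T P) z \<le> qf Q z + qf P (transpose A *v z)"
proof -
  let ?w = "transpose A *v z"
  have "qf (matrix_inv (matrix_inv P + T)) ?w \<le> qf (matrix_inv (matrix_inv P)) ?w"
    using psd_qf_nonneg[OF T]
    by (intro qf_matrix_inv_antimono pd_matrix_inv pd_add_psd P T) (simp add: qf_add)
  then have "lam * qf (matrix_inv (matrix_inv P + T)) ?w \<le> lam * qf P ?w"
    using lam matrix_inv_inv[OF pd_invertible[OF P]] by (intro mult_left_mono) simp_all
  then show ?thesis
    unfolding qf_riccati_info by (simp add: algebra_simps)
qed

section \<open>The Lyapunov solution as a supersolution\<close>

lemma lyapunov_telescope:
  assumes "\<Sigma> = A ** \<Sigma> ** transpose A + Q"
  shows "qf \<Sigma> z = qf \<Sigma> (transpose (matpow A N) *v z) + (\<Sum>k<N. qf Q (transpose (matpow A k) *v z))"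
proof (induction N)
  case (Suc N)
  let ?w = "\<lambda>k. transpose (matpow A k) *v z"
  have "qf \<Sigma> (?w N) = qf \<Sigma> (transpose A *v ?w N) + qf Q (?w N)"
    using arg_cong[OF assms, of "\<lambda>M. qf M (?w N)"] by (simp add: qf_add qf_sandwich)
  also have "transpose A *v ?w N = ?w (Suc N)"
    by (simp add: matrix_transpose_mul matrix_vector_mul_assoc)
  finally show ?case
    using Suc.IH by simp
qed simp

text \<open>By stability the first term vanishes as \<open>N \<rightarrow> \<infinity>\<close>, leaving \<open>\<Sigma> \<ge> Q\<close>.\<close>

lemma lyapunov_solution_ge:
  fixes A Q \<Sigma> :: "real^'n^'n"
  assumes A: "spectral_radius A < 1" and Q: "pd Q" and \<Sigma>: "\<Sigma> = A ** \<Sigma> ** transpose A + Q"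
  shows "qf Q z \<le> qf \<Sigma> z"
proof -
  let ?w = "\<lambda>N. transpose (matpow A N) *v z"
  have "(\<lambda>N. ?w N $ i) \<longlonglongrightarrow> (\<Sum>j\<in>UNIV. 0 * z $ j)" for i
    unfolding matrix_vector_mult_def transpose_def
    by (simp only: vec_lambda_beta) (intro tendsto_sum tendsto_mult_right matpow_tendsto_zero[OF A])
  then have w: "(\<lambda>N. ?w N $ i) \<longlonglongrightarrow> 0" for i
    by simp
  have "(\<lambda>N. qf \<Sigma> (?w N)) \<longlonglongrightarrow> (\<Sum>i\<in>UNIV. \<Sum>j\<in>(UNIV :: 'n set). 0 * \<Sigma> $ i $ j * 0)"
    unfolding qf_entries by (intro tendsto_sum tendsto_mult tendsto_const w)
  then have lim: "(\<lambda>N. qf \<Sigma> z - qf \<Sigma> (?w N)) \<longlonglongrightarrow> qf \<Sigma> z - 0"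
    by (intro tendsto_diff tendsto_const) simp
  have "qf Q z \<le> qf \<Sigma> z - qf \<Sigma> (?w N)" if "1 \<le> N" for N
  proof -
    have "qf Q (?w 0) \<le> (\<Sum>k<N. qf Q (?w k))"
      using that pd_qf_nonneg[OF Q] by (intro member_le_sum) auto
    then show ?thesis
      using lyapunov_telescope[OF \<Sigma>, of z N] by simp
  qed
  then have "\<exists>N. \<forall>n\<ge>N. qf Q z \<le> qf \<Sigma> z - qf \<Sigma> (?w n)"
    by blast
  then show ?thesis
    using LIMSEQ_le_const[OF lim] by simp
qed

text \<open>\<open>\<Sigma>\<close> itself need not be symmetric; its symmetric part has the same quadratic form.\<close>

lemma lyapunov_supersolution:
  assumes A: "spectral_radius A < 1" and Q: "pd Q" and \<Sigma>: "\<Sigma> = A ** \<Sigma> ** transpose A + Q"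
  obtains P where "pd P" "\<And>z. qf Q z + qf P (transpose A *v z) \<le> qf P z"
proof
  let ?P = "(1 / 2) *\<^sub>R (\<Sigma> + transpose \<Sigma>)"
  have qfP: "qf ?P z = qf \<Sigma> z" for z
    by (simp add: qf_scaleR qf_add qf_transpose)
  show "pd ?P"
    using lyapunov_solution_ge[OF A Q \<Sigma>] Q
    by (auto simp: pd_qf qfP transpose_scalar transpose_add add.commute intro: less_le_trans)
  show "qf Q z + qf ?P (transpose A *v z) \<le> qf ?P z" for z
    using arg_cong[OF \<Sigma>, of "\<lambda>M. qf M z"] by (simp add: qfP qf_add qf_sandwich)
qed

text \<open>\<open>X_ol\<close> is a definite description: it denotes the fixed point only once some fixed point is
  known to exist, which a supersolution guarantees.\<close>

lemma X_ol_below_supersolution: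
  fixes A Q P :: "real^'n^'n" and C :: "real^'n^'m" and R Y :: "real^'m^'m"
  assumes Y: "psd Y" and R: "pd R" and Q: "pd Q" and lam: "0 \<le> lam" "lam \<le> 1"
    and P: "pd P" "\<And>z. qf (riccati_info A Q lam (obs_info C R Y) P) z \<le> qf P z"
  shows "pd (X_ol A C Q lam R Y)"
    and "riccati_info A Q lam (obs_info C R Y) (X_ol A C Q lam R Y) = X_ol A C Q lam R Y"
    and "qf (X_ol A C Q lam R Y) z \<le> qf P z"
proof -
  interpret monotone_concave_map "riccati_info A Q lam (obs_info C R Y)" Q
    using riccati_info_monotone_concave[OF Q psd_obs_info[OF R Y] lam] .
  obtain X where X: "pd X" "riccati_info A Q lam (obs_info C R Y) X = X" "\<And>z. qf X z \<le> qf P z"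
    using fixed_point_exists[OF P] by blast
  have "X_ol A C Q lam R Y = X"
    unfolding X_ol_def
  proof (rule the_equality)
    show "pd X \<and> X = g_ol A C Q lam R Y X"
      using X g_ol_info_form[OF X(1) Y R] by simp
    show "X' = X" if "pd X' \<and> X' = g_ol A C Q lam R Y X'" for X'
      using that g_ol_info_form[OF _ Y R] fixed_point_unique[OF _ _ X(1,2)] by metis
  qed
  then show "pd (X_ol A C Q lam R Y)"
    and "riccati_info A Q lam (obs_info C R Y) (X_ol A C Q lam R Y) = X_ol A C Q lam R Y"
    and "qf (X_ol A C Q lam R Y) z \<le> qf P z"
    using X by simp_all
qed

lemma sdp_feasible_if_X_ol_le:
  fixes A Q M P :: "real^'n^'n" and C :: "real^'n^'m" and R Y :: "real^'m^'m"
  assumes Y: "psd Y" and R: "pd R" and Q: "pd Q" and M: "pd M" and lam: "0 \<le> lam" "lam \<le> 1"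
    and P: "pd P" "\<And>z. qf (riccati_info A Q lam (obs_info C R Y) P) z \<le> qf P z"
    and XM: "loewner_le (X_ol A C Q lam R Y) M"
  defines "S \<equiv> matrix_inv (X_ol A C Q lam R Y)"
  shows "psd (Psi A C Q R lam S Y)" and "psd (blk2 S (mat 1) (mat 1) M)"
proof -
  note X = X_ol_below_supersolution[OF Y R Q lam P]
  have S: "pd S" and inv: "matrix_inv S = X_ol A C Q lam R Y"
    unfolding S_def using X(1) by (simp_all add: pd_matrix_inv matrix_inv_inv pd_invertible)
  show "psd (Psi A C Q R lam S Y)"
    using psd_Psi_iff[OF S Y R Q lam] X(2) inv by simp
  show "psd (blk2 S (mat 1) (mat 1) M)"
    using psd_blk2_id_iff[OF M, of S] S XM inv by (simp add: loewner_le_qf)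
qed

lemma X_ol_le_if_sdp_feasible:
  fixes A Q M S :: "real^'n^'n" and C :: "real^'n^'m" and R Y :: "real^'m^'m"
  assumes Y: "psd Y" and R: "pd R" and Q: "pd Q" and M: "pd M" and lam: "0 \<le> lam" "lam \<le> 1"
    and Psi: "psd (Psi A C Q R lam S Y)" and blk: "psd (blk2 S (mat 1) (mat 1) M)"
  shows "loewner_le (X_ol A C Q lam R Y) M"
proof -
  have S: "pd S" "\<And>v. qf (matrix_inv S) v \<le> qf M v"
    using psd_blk2_id_iff[OF M] blk by auto
  have "qf (riccati_info A Q lam (obs_info C R Y) (matrix_inv S)) z \<le> qf (matrix_inv S) z" for z
    using psd_Psi_iff[OF S(1) Y R Q lam] Psi by blast
  note X = X_ol_below_supersolution[OF Y R Q lam pd_matrix_inv[OF S(1)] this]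
  show ?thesis
    using X(3) S(2) pd_sym[OF X(1)] pd_sym[OF M]
    by (auto simp: loewner_le_qf transpose_diff intro: order.trans)
qed

theorem theorem2:
  fixes A Q M \<Sigma> :: "real^'n^'n" and C :: "real^'n^'m" and R :: "real^'m^'m" and lam :: real
  assumes "spectral_radius A < 1"
    and "pd Q" and "pd R" and "pd M"
    and "0 < lam" and "lam \<le> 1"
    and "\<Sigma> = A ** \<Sigma> ** transpose A + Q"
  shows "\<forall>Y :: real^'m^'m.
           (psd Y \<and> loewner_le (X_ol A C Q lam R Y) M)
           \<longleftrightarrow> (\<exists>S :: real^'n^'n. psd (Psi A C Q R lam S Y)
                   \<and> psd (blk2 S (mat 1) (mat 1) M) \<and> psd Y)"
proof -
  have lam: "0 \<le> lam" "lam \<le> 1"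
    using assms(5,6) by simp_all
  obtain P where P: "pd P" "\<And>z. qf Q z + qf P (transpose A *v z) \<le> qf P z"
    using lyapunov_supersolution[OF assms(1,2,7)] by blast
  have super: "qf (riccati_info A Q lam (obs_info C R Y) P) z \<le> qf P z" if "psd Y" for Y z
    using riccati_info_le_lyapunov[OF P(1) psd_obs_info[OF assms(3) that] lam(1)] P(2)
    by (rule order.trans)
  show ?thesis
  proof (intro allI iffI)
    fix Y :: "real^'m^'m"
    assume "psd Y \<and> loewner_le (X_ol A C Q lam R Y) M"
    then show "\<exists>S. psd (Psi A C Q R lam S Y) \<and> psd (blk2 S (mat 1) (mat 1) M) \<and> psd Y"
      using sdp_feasible_if_X_ol_le[OF _ assms(3,2,4) lam P(1) super] by blast
  next
    fix Y :: "real^'m^'m"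
    assume "\<exists>S. psd (Psi A C Q R lam S Y) \<and> psd (blk2 S (mat 1) (mat 1) M) \<and> psd Y"
    then show "psd Y \<and> loewner_le (X_ol A C Q lam R Y) M"
      using X_ol_le_if_sdp_feasible[OF _ assms(3,2,4) lam] by blast
  qed
qed

end
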